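(* Let $\sigma>0$ and let $\vec\alpha=(\alpha_n)_{n\ge0}$, $\vec\beta=(\beta_n)_{n\ge0}$ be sequences of non-negative reals, neither identically zero, such that $$\sum_{n=0}^\infty n\alpha_n<\infty\quad\text{and}\quad \sum_{n=0}^\infty n\beta_n<\infty.$$ For each $L\ge1$ let $(\gamma^{(L)}_0,\dots,\gamma^{(L)}_L)$ be a random Motzkin path of length $L$ sampled from $\Pr_L$ (defined in the context), and define the processes $\{\gamma^{(L)}_k\}_{k\ge0}$ and $\{\widetilde\gamma^{(L)}_k\}_{k\ge0}$ by $\gamma^{(L)}_k:=0$ for $k>L$, and $\widetilde\gamma^{(L)}_k:=\gamma^{(L)}_{L-k}$ for $0\le k\le L$, $\widetilde\gamma^{(L)}_k:=0$ for $k>L$. Then, as $L\to\infty$, $$\Big(\{\gamma^{(L)}_k\}_{k\ge0},\{\widetilde\gamma^{(L)}_k\}_{k\ge0}\Big)\Rightarrow\Big(\{X_k\}_{k\ge0},\{X'_k\}_{k\ge0}\Big)$$ in the sense of convergence of finite-dimensional distributions, where $\{X_k\}$ and $\{X'_k\}$ are two independent Markov chains on $\mathbb Z_{\ge0}$ with the same transition probabilities $$\mathsf P_{n,m}=\begin{cases}\frac{1}{2+\sigma}\frac{n+2}{n+1}, & m=n+1,\\ \frac{\sigma}{2+\sigma}, & m=n,\\ \frac{1}{2+\sigma}\frac{n}{n+1}, & m=n-1\ge0,\\ 0, &\text{otherwise},\end{cases}\qquad n\ge0,$$ and initial laws $$\Pr(X_0=n)=\frac{(n+1)\alpha_n}{C_{\vec\alpha}},\qquad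 \Pr(X'_0=n)=\frac{(n+1)\beta_n}{C_{\vec\beta}},\quad n\ge0,$$ with $C_{\vec\alpha}=\sum_{m\ge0}(m+1)\alpha_m$ and $C_{\vec\beta}=\sum_{m\ge0}(m+1)\beta_m$.
   Context: A Motzkin path of length $L\in\mathbb Z_{\ge1}$ is a sequence $\vec\gamma=(\gamma_0,\gamma_1,\dots,\gamma_L)$ of non-negative integers with $|\gamma_k-\gamma_{k-1}|\le1$ for $k=1,\dots,L$; $\mathcal M^{(L)}$ denotes the set of all such paths (with arbitrary end points). Given $\sigma>0$, the weight of a path is $w(\vec\gamma)=\sigma^{\#\{k\in\{1,\dots,L\}:\ \gamma_k=\gamma_{k-1}\}}$ (up steps and down steps have weight $1$, horizontal steps weight $\sigma$). Given non-negative sequences $\vec\alpha,\vec\beta$, set $\mathfrak C_{\vec\alpha,\vec\beta,L}=\sum_{\vec\gamma\in\mathcal M^{(L)}}\alpha_{\gamma_0}\beta_{\gamma_L}w(\vec\gamma)$; when this is finite and positive, $\Pr_L(\vec\gamma)=\alpha_{\gamma_0}\beta_{\gamma_L}w(\vec\gamma)/\mathfrak C_{\vec\alpha,\vec\beta,L}$ is a probability measure on $\mathcal M^{(L)}$. *)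

theory Defs
  imports "HOL-Analysis.Analysis"
begin

definition motzkin_paths :: "nat \<Rightarrow> nat list set" where
  "motzkin_paths L = {g. length g = Suc L \<and>
      (\<forall>k<L. \<bar>int (g ! Suc k) - int (g ! k)\<bar> \<le> 1)}"

definition path_weight :: "real \<Rightarrow> nat \<Rightarrow> nat list \<Rightarrow> real" where
  "path_weight \<sigma> L g = \<sigma> ^ card {k. k < L \<and> g ! Suc k = g ! k}"

definition motzkin_const :: "(nat \<Rightarrow> real) \<Rightarrow> (nat \<Rightarrow> real) \<Rightarrow> real \<Rightarrow> nat \<Rightarrow> real" where
  "motzkin_const \<alpha> \<beta> \<sigma> L =
     infsum (\<lambda>g. \<alpha> (g ! 0) * \<beta> (g ! L) * path_weight \<sigma> L g) (motzkin_paths L)"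

definition motzkin_prob ::
  "(nat \<Rightarrow> real) \<Rightarrow> (nat \<Rightarrow> real) \<Rightarrow> real \<Rightarrow> nat \<Rightarrow> nat list set \<Rightarrow> real" where
  "motzkin_prob \<alpha> \<beta> \<sigma> L E =
     infsum (\<lambda>g. \<alpha> (g ! 0) * \<beta> (g ! L) * path_weight \<sigma> L g) (motzkin_paths L \<inter> E)
     / motzkin_const \<alpha> \<beta> \<sigma> L"

definition gamma_proc :: "nat \<Rightarrow> nat list \<Rightarrow> nat \<Rightarrow> nat" where
  "gamma_proc L g k = (if k \<le> L then g ! k else 0)"

definition gamma_rev_proc :: "nat \<Rightarrow> nat list \<Rightarrow> nat \<Rightarrow> nat" where
  "gamma_rev_proc L g k = (if k \<le> L then g ! (L - k) else 0)"

definition trans_P :: "real \<Rightarrow> nat \<Rightarrow> nat \<Rightarrow> real" where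
  "trans_P \<sigma> n m =
     (if m = Suc n then 1 / (2 + \<sigma>) * (real n + 2) / (real n + 1)
      else if m = n then \<sigma> / (2 + \<sigma>)
      else if Suc m = n then 1 / (2 + \<sigma>) * real n / (real n + 1)
      else 0)"

definition init_law :: "(nat \<Rightarrow> real) \<Rightarrow> nat \<Rightarrow> real" where
  "init_law \<alpha> n = (real n + 1) * \<alpha> n / (\<Sum>m. (real m + 1) * \<alpha> m)"

definition mc_cyl_prob ::
  "(nat \<Rightarrow> real) \<Rightarrow> (nat \<Rightarrow> nat \<Rightarrow> real) \<Rightarrow> nat \<Rightarrow> nat set \<Rightarrow> (nat \<Rightarrow> nat) \<Rightarrow> real" where
  "mc_cyl_prob \<mu> P K I x =
     infsum (\<lambda>z. \<mu> (z ! 0) * (\<Prod>i<K. P (z ! i) (z ! Suc i)))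
       {z. length z = Suc K \<and> (\<forall>k\<in>I. z ! k = x k)}"

end

theory Submission
  imports Defs
begin

text \<open>Write \<open>W\<^sub>M(a, b)\<close> for the total weight of the Motzkin paths of length \<open>M\<close> from \<open>a\<close> to \<open>b\<close>.
  For \<open>L = K + (M + 1) + K\<close>, a path pinned at the times in \<open>I \<subseteq> {0..K}\<close> and at the times
  \<open>L - j\<close>, \<open>j \<in> J \<subseteq> {0..K}\<close>, splits into two end segments of length \<open>K\<close> joined by a free bridge,
  which contributes \<open>W\<^sub>M\<^sub>+\<^sub>1(b, b')\<close>. The spectral formula
  \<open>W\<^sub>M(a, b) = 2/\<pi> \<integral>\<^sub>0\<^sup>\<pi> (\<sigma> + 2 cos t)\<^sup>M sin ((a + 1) t) sin ((b + 1) t) dt\<close> and the concentration of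
  \<open>(\<sigma> + 2 cos t)\<^sup>M sin\<^sup>2 t\<close> at \<open>t = 0\<close> give \<open>W\<^sub>M(a, b) / W\<^sub>M(0, 0) \<rightarrow> (a + 1) (b + 1)\<close>, with the
  uniform bound \<open>2 (a + 1) (b + 1)\<close>. By dominated convergence the bridge therefore decouples the two
  ends in the limit, each end carrying the factor \<open>b + 1\<close>. This is the positive eigenfunction
  (eigenvalue \<open>2 + \<sigma>\<close>) of the Motzkin step kernel, and the Doob transform of the kernel by it is
  the transition matrix \<open>P\<close>; the same factor turns \<open>\<alpha>\<close> and \<open>\<beta>\<close> into the initial laws.\<close>

section \<open>Weighted Motzkin bridges and their spectral representation\<close>

text \<open>\<open>bridge_weight \<sigma> M a b\<close> is \<open>W\<^sub>M(a, b)\<close>, computed by decomposing at the first step.\<close>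
fun bridge_weight :: "real \<Rightarrow> nat \<Rightarrow> nat \<Rightarrow> nat \<Rightarrow> real" where
  "bridge_weight \<sigma> 0 a b = (if a = b then 1 else 0)"
| "bridge_weight \<sigma> (Suc M) a b =
     \<sigma> * bridge_weight \<sigma> M a b + bridge_weight \<sigma> M (Suc a) b
     + (if a = 0 then 0 else bridge_weight \<sigma> M (a - 1) b)"

lemma bridge_weight_nonneg: "\<sigma> \<ge> 0 \<Longrightarrow> bridge_weight \<sigma> M a b \<ge> 0"
  by (induction M arbitrary: a) auto

lemma bridge_weight_eq_0: "a + M < b \<Longrightarrow> bridge_weight \<sigma> M a b = 0"
  by (induction M arbitrary: a) auto

lemma power_le_bridge_weight_0_0: "\<sigma> \<ge> 0 \<Longrightarrow> \<sigma> ^ M \<le> bridge_weight \<sigma> M 0 0"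
proof (induction M)
  case (Suc M)
  then have "\<sigma> * \<sigma> ^ M \<le> \<sigma> * bridge_weight \<sigma> M 0 0"
    by (intro mult_left_mono) auto
  then show ?case
    using bridge_weight_nonneg[OF Suc.prems, of M 1 0] by simp
qed simp

lemma bridge_weight_0_0_pos: "\<sigma> > 0 \<Longrightarrow> bridge_weight \<sigma> M 0 0 > 0"
  by (rule order_less_le_trans[OF zero_less_power power_le_bridge_weight_0_0]) auto

lemma has_integral_cos_int_mult:
  "((\<lambda>t. cos (of_int k * t)) has_integral (if k = 0 then pi else 0)) {0..pi}"
proof (cases "k = 0")
  case True
  then show ?thesis using has_integral_const_real[of "1::real" 0 pi] by simp
next
  case False
  have "((\<lambda>t. cos (of_int k * t)) has_integral
          sin (of_int k * pi) / of_int k - sin (of_int k * 0) / of_int k) {0..pi}"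
    using False
    by (intro fundamental_theorem_of_calculus)
       (auto intro!: derivative_eq_intros simp: has_real_derivative_iff_has_vector_derivative[symmetric])
  then show ?thesis
    using False sin_npi_int[of k] by (simp add: mult.commute)
qed

lemma integral_sin_mult_sin:
  "integral {0..pi} (\<lambda>t. sin ((real a + 1) * t) * sin ((real b + 1) * t))
     = (if a = b then pi / 2 else 0)"
proof -
  have "(\<lambda>t. (cos (of_int (int a - int b) * t) - cos (of_int (int a + int b + 2) * t)) * (1 / 2))
      = (\<lambda>t. sin ((real a + 1) * t) * sin ((real b + 1) * t))"
    by (rule ext) (simp add: sin_times_sin algebra_simps)
  moreover have "((\<lambda>t. (cos (of_int (int a - int b) * t) - cos (of_int (int a + int b + 2) * t))
        * (1 / 2)) has_integral ((if a = b then pi else 0) - 0) * (1 / 2)) {0..pi}"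
    by (intro has_integral_mult_left has_integral_diff
          has_integral_cos_int_mult[THEN has_integral_eq_rhs]) auto
  ultimately show ?thesis
    by (auto dest: integral_unique)
qed

lemma two_cos_mult_sin:
  "2 * cos t * sin ((real a + 1) * t)
     = sin ((real a + 2) * t) + (if a = 0 then 0 else sin ((real (a - 1) + 1) * t))"
proof -
  have "sin ((real a + 2) * t) = sin ((real a + 1) * t + t)"
    by (simp add: algebra_simps)
  moreover have "sin (real a * t) = sin ((real a + 1) * t - t)"
    by (simp add: algebra_simps)
  moreover have "(if a = 0 then 0 else sin ((real (a - 1) + 1) * t)) = sin (real a * t)"
    by (cases a) (auto simp: add.commute)
  ultimately show ?thesis
    by (simp add: sin_add sin_diff)
qed

definition spectral_integral :: "real \<Rightarrow> nat \<Rightarrow> nat \<Rightarrow> nat \<Rightarrow> real" where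
  "spectral_integral \<sigma> M a b =
     integral {0..pi} (\<lambda>t. (\<sigma> + 2 * cos t) ^ M * sin ((real a + 1) * t) * sin ((real b + 1) * t))"

text \<open>For each \<open>t\<close>, \<open>a \<mapsto> sin ((a + 1) t)\<close> is an eigenvector of the first-step recursion with
  eigenvalue \<open>\<sigma> + 2 cos t\<close> (the missing down-step at \<open>a = 0\<close> is matched by \<open>sin 0 = 0\<close>), and these
  eigenvectors are orthogonal on \<open>[0, \<pi>]\<close>.\<close>
lemma bridge_weight_spectral: "bridge_weight \<sigma> M a b = 2 / pi * spectral_integral \<sigma> M a b"
proof (induction M arbitrary: a)
  case 0
  then show ?case
    using integral_sin_mult_sin[of a b] by (simp add: spectral_integral_def)
next
  case (Suc M)
  define g where "g c t = (\<sigma> + 2 * cos t) ^ M * sin ((real c + 1) * t) * sin ((real b + 1) * t)"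
    for c t
  have g_integrable: "g c integrable_on {0..pi}" for c
    unfolding g_def by (intro integrable_continuous_real continuous_intros)
  have "(\<sigma> + 2 * cos t) ^ Suc M * sin ((real a + 1) * t) * sin ((real b + 1) * t)
      = \<sigma> * g a t + g (Suc a) t + (if a = 0 then 0 else g (a - 1) t)" for t
  proof -
    have "(\<sigma> + 2 * cos t) ^ Suc M * sin ((real a + 1) * t) * sin ((real b + 1) * t)
       = (\<sigma> + 2 * cos t) ^ M * sin ((real b + 1) * t)
           * (\<sigma> * sin ((real a + 1) * t) + 2 * cos t * sin ((real a + 1) * t))"
      by (simp add: algebra_simps)
    then show ?thesis
      unfolding two_cos_mult_sin g_def by (simp add: algebra_simps)
  qed
  then have "spectral_integral \<sigma> (Suc M) a b
      = integral {0..pi} (\<lambda>t. \<sigma> * g a t + g (Suc a) t + (if a = 0 then 0 else g (a - 1) t))"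
    unfolding spectral_integral_def by simp
  also have "\<dots> = \<sigma> * integral {0..pi} (g a) + integral {0..pi} (g (Suc a))
      + (if a = 0 then 0 else integral {0..pi} (g (a - 1)))"
    by (cases "a = 0")
       (auto intro!: integral_unique has_integral_add has_integral_mult_right integrable_integral
          g_integrable)
  finally have "spectral_integral \<sigma> (Suc M) a b = \<sigma> * integral {0..pi} (g a)
      + integral {0..pi} (g (Suc a)) + (if a = 0 then 0 else integral {0..pi} (g (a - 1)))" .
  moreover have "spectral_integral \<sigma> M c b = integral {0..pi} (g c)" for c
    unfolding spectral_integral_def g_def[abs_def] ..
  ultimately show ?case
    using Suc.IH by (simp add: algebra_simps)
qed

fun chebyshev_U :: "nat \<Rightarrow> real \<Rightarrow> real" where
  "chebyshev_U 0 x = 1"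
| "chebyshev_U (Suc 0) x = 2 * x"
| "chebyshev_U (Suc (Suc n)) x = 2 * x * chebyshev_U (Suc n) x - chebyshev_U n x"

lemma sin_Suc_mult_eq_chebyshev_U: "sin ((real n + 1) * t) = chebyshev_U n (cos t) * sin t"
proof (induction n rule: induct_nat_012)
  case 1
  then show ?case using sin_double[of t] by (simp add: algebra_simps)
next
  case (ge2 n)
  have "sin ((real (Suc (Suc n)) + 1) * t)
      = 2 * cos t * sin ((real (Suc n) + 1) * t) - sin ((real n + 1) * t)"
    using two_cos_mult_sin[of t "Suc n"] by (simp add: add.commute)
  then show ?case using ge2 by (simp add: algebra_simps)
qed simp

lemma chebyshev_U_1: "chebyshev_U n 1 = real n + 1"
  by (induction n rule: induct_nat_012) auto

lemma continuous_on_chebyshev_U [continuous_intros]: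
  "continuous_on S f \<Longrightarrow> continuous_on S (\<lambda>x. chebyshev_U n (f x))"
  by (induction n rule: induct_nat_012) (auto intro!: continuous_intros)

lemma abs_sin_Suc_mult_le: "\<bar>sin ((real n + 1) * t)\<bar> \<le> (real n + 1) * \<bar>sin t\<bar>"
proof (induction n)
  case (Suc n)
  have "(real (Suc n) + 1) * t = (real n + 1) * t + t"
    by (simp add: algebra_simps)
  then have "sin ((real (Suc n) + 1) * t)
      = sin ((real n + 1) * t) * cos t + cos ((real n + 1) * t) * sin t"
    by (simp only: sin_add)
  also have "\<bar>\<dots>\<bar> \<le> \<bar>sin ((real n + 1) * t)\<bar> * \<bar>cos t\<bar> + \<bar>cos ((real n + 1) * t)\<bar> * \<bar>sin t\<bar>"
    by (simp add: abs_mult[symmetric] abs_triangle_ineq)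
  also have "\<dots> \<le> (real n + 1) * \<bar>sin t\<bar> * 1 + 1 * \<bar>sin t\<bar>"
    by (intro add_mono mult_mono Suc.IH) auto
  finally show ?case by (simp add: algebra_simps)
qed simp

section \<open>Concentration of the spectral weight at \<open>t = 0\<close>\<close>

definition spectral_weight :: "real \<Rightarrow> nat \<Rightarrow> real \<Rightarrow> real" where
  "spectral_weight \<sigma> M t = (\<sigma> + 2 * cos t) ^ M * (sin t)\<^sup>2"

definition tail_integral :: "real \<Rightarrow> nat \<Rightarrow> real \<Rightarrow> real" where
  "tail_integral \<sigma> M d = integral {d..pi} (\<lambda>t. \<bar>spectral_weight \<sigma> M t\<bar>)"

lemma continuous_on_spectral_weight [continuous_intros]: "continuous_on S (spectral_weight \<sigma> M)"
  unfolding spectral_weight_def by (intro continuous_intros)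

lemma spectral_weight_nonneg:
  assumes "\<sigma> \<ge> 0" "0 \<le> t" "t \<le> pi / 2"
  shows "spectral_weight \<sigma> M t \<ge> 0"
proof -
  have "cos t \<ge> 0" using assms by (intro cos_ge_zero) auto
  then show ?thesis using assms(1) unfolding spectral_weight_def by simp
qed

lemma spectral_integral_0_0:
  "spectral_integral \<sigma> M 0 0 = integral {0..pi} (spectral_weight \<sigma> M)"
  unfolding spectral_integral_def spectral_weight_def by (simp add: power2_eq_square mult.assoc)

lemma spectral_mass_pos: "\<sigma> > 0 \<Longrightarrow> integral {0..pi} (spectral_weight \<sigma> M) > 0"
  using bridge_weight_0_0_pos[of \<sigma> M]
  by (simp add: bridge_weight_spectral spectral_integral_0_0 zero_less_mult_iff zero_less_divide_iff)

lemma tail_integral_nonneg: "tail_integral \<sigma> M d \<ge> 0"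
  unfolding tail_integral_def
  by (intro integral_nonneg integrable_continuous_real continuous_intros) auto

lemma spectral_mass_minus_head:
  assumes "0 \<le> d" "d \<le> pi"
  shows "\<bar>integral {0..pi} (spectral_weight \<sigma> M) - integral {0..d} (spectral_weight \<sigma> M)\<bar>
           \<le> tail_integral \<sigma> M d"
proof -
  have "integral {0..d} (spectral_weight \<sigma> M) + integral {d..pi} (spectral_weight \<sigma> M)
      = integral {0..pi} (spectral_weight \<sigma> M)"
    using assms
    by (auto intro!: Henstock_Kurzweil_Integration.integral_combine integrable_continuous_real
          continuous_intros)
  moreover have "\<bar>integral {d..pi} (spectral_weight \<sigma> M)\<bar> \<le> tail_integral \<sigma> M d"
    unfolding tail_integral_def
    using integral_norm_bound_integral[of "spectral_weight \<sigma> M" "{d..pi}"]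
    by (simp add: integrable_continuous_real continuous_intros)
  ultimately show ?thesis by simp
qed

lemma integral_abs_spectral_weight_le:
  assumes "\<sigma> \<ge> 0" "0 \<le> d" "d \<le> pi / 2"
  shows "integral {0..pi} (\<lambda>t. \<bar>spectral_weight \<sigma> M t\<bar>)
           \<le> integral {0..pi} (spectral_weight \<sigma> M) + 2 * tail_integral \<sigma> M d"
proof -
  have "integral {0..d} (\<lambda>t. \<bar>spectral_weight \<sigma> M t\<bar>) + tail_integral \<sigma> M d
      = integral {0..pi} (\<lambda>t. \<bar>spectral_weight \<sigma> M t\<bar>)"
    unfolding tail_integral_def using assms pi_gt_zero
    by (auto intro!: Henstock_Kurzweil_Integration.integral_combine integrable_continuous_real
          continuous_intros)
  moreover have "integral {0..d} (\<lambda>t. \<bar>spectral_weight \<sigma> M t\<bar>)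
      = integral {0..d} (spectral_weight \<sigma> M)"
    using assms spectral_weight_nonneg by (intro integral_cong) auto
  moreover have "\<bar>integral {0..pi} (spectral_weight \<sigma> M) - integral {0..d} (spectral_weight \<sigma> M)\<bar>
      \<le> tail_integral \<sigma> M d"
    using assms pi_gt_zero by (intro spectral_mass_minus_head) auto
  ultimately show ?thesis by linarith
qed

lemma tail_integral_le:
  assumes "0 \<le> d" "d \<le> pi"
  shows "tail_integral \<sigma> M d \<le> pi * max (\<sigma> + 2 * cos d) (2 - \<sigma>) ^ M"
proof -
  let ?\<rho> = "max (\<sigma> + 2 * cos d) (2 - \<sigma>)"
  have bound: "\<bar>\<sigma> + 2 * cos t\<bar> \<le> ?\<rho>" if "t \<in> {d..pi}" for t
  proof -
    have "cos t \<le> cos d"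
      using that assms by (intro cos_monotone_0_pi_le) auto
    then show ?thesis
      using cos_ge_minus_one[of t] max.cobounded1[of "\<sigma> + 2 * cos d" "2 - \<sigma>"]
        max.cobounded2[of "2 - \<sigma>" "\<sigma> + 2 * cos d"]
      unfolding abs_le_iff by linarith
  qed
  then have "0 \<le> ?\<rho>"
    using bound[of pi] assms by auto
  have "tail_integral \<sigma> M d \<le> integral {d..pi} (\<lambda>t. ?\<rho> ^ M)"
    unfolding tail_integral_def
  proof (intro integral_le integrable_continuous_real continuous_intros)
    fix t assume "t \<in> {d..pi}"
    then have "\<bar>\<sigma> + 2 * cos t\<bar> ^ M * (sin t)\<^sup>2 \<le> ?\<rho> ^ M * 1"
      using \<open>0 \<le> ?\<rho>\<close> bound by (intro mult_mono power_mono) (auto simp: abs_square_le_1)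
    then show "\<bar>spectral_weight \<sigma> M t\<bar> \<le> ?\<rho> ^ M"
      by (simp add: spectral_weight_def abs_mult power_abs)
  qed
  also have "\<dots> = (pi - d) * ?\<rho> ^ M"
    using assms by simp
  also have "\<dots> \<le> pi * ?\<rho> ^ M"
    using assms \<open>0 \<le> ?\<rho>\<close> by (intro mult_right_mono) auto
  finally show ?thesis .
qed

lemma spectral_mass_ge:
  assumes "\<sigma> \<ge> 0" "0 < d" "d \<le> pi / 2"
  shows "d / 4 * (sin (d / 4))\<^sup>2 * (\<sigma> + 2 * cos (d / 2)) ^ M - tail_integral \<sigma> M d
           \<le> integral {0..pi} (spectral_weight \<sigma> M)"
proof -
  have "d / 4 * ((\<sigma> + 2 * cos (d / 2)) ^ M * (sin (d / 4))\<^sup>2)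
      = integral {d/4..d/2} (\<lambda>t. (\<sigma> + 2 * cos (d / 2)) ^ M * (sin (d / 4))\<^sup>2)"
    using assms by simp
  also have "\<dots> \<le> integral {d/4..d/2} (spectral_weight \<sigma> M)"
  proof (intro integral_le integrable_continuous_real continuous_intros)
    fix t assume t: "t \<in> {d/4..d/2}"
    have "cos (d / 2) \<le> cos t" "sin (d / 4) \<le> sin t" "0 \<le> cos (d / 2)" "0 < sin (d / 4)"
      using t assms pi_gt_zero
      by (auto intro!: cos_monotone_0_pi_le sin_monotone_2pi_le cos_ge_zero sin_gt_zero)
    then show "(\<sigma> + 2 * cos (d / 2)) ^ M * (sin (d / 4))\<^sup>2 \<le> spectral_weight \<sigma> M t"
      unfolding spectral_weight_def using assms(1)
      by (intro mult_mono power_mono) auto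
  qed
  also have "\<dots> \<le> integral {0..d} (spectral_weight \<sigma> M)"
    using assms by (intro integral_subset_le integrable_continuous_real continuous_intros)
                   (auto intro!: spectral_weight_nonneg)
  finally show ?thesis
    using spectral_mass_minus_head[of d \<sigma> M] assms pi_gt_zero by (simp add: algebra_simps)
qed

text \<open>The hypothesis on \<open>cos d\<close> keeps \<open>|\<sigma> + 2 cos t|\<close> on \<open>[d, \<pi>]\<close>, also near \<open>t = \<pi>\<close>, below its
  value \<open>\<sigma> + 2 cos (d / 2)\<close> at \<open>d / 2\<close>, so the tail is exponentially small against the mass.\<close>
lemma tail_ratio_tendsto_0:
  assumes "\<sigma> > 0" "0 < d" "d \<le> pi / 2" "1 - \<sigma> < cos d"
  shows "(\<lambda>M. tail_integral \<sigma> M d / integral {0..pi} (spectral_weight \<sigma> M)) \<longlonglongrightarrow> 0"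
proof -
  define \<tau> where "\<tau> = \<sigma> + 2 * cos (d / 2)"
  define \<rho> where "\<rho> = max (\<sigma> + 2 * cos d) (2 - \<sigma>)"
  define \<kappa> where "\<kappa> = d / 4 * (sin (d / 4))\<^sup>2"
  define r where "r = \<rho> / \<tau>"
  have "cos d < cos (d / 2)" "0 \<le> cos d"
    using assms pi_gt_zero by (auto intro!: cos_monotone_0_pi cos_ge_zero)
  then have "0 \<le> \<rho>" "\<rho> < \<tau>"
    using assms unfolding \<rho>_def \<tau>_def by auto
  then have "0 < \<tau>" "0 \<le> r" "r < 1"
    unfolding r_def by auto
  have "0 < sin (d / 4)"
    using assms pi_gt_zero by (intro sin_gt_zero) auto
  then have "0 < \<kappa>"
    unfolding \<kappa>_def using assms by simp
  have tail: "tail_integral \<sigma> M d \<le> pi * r ^ M * \<tau> ^ M" for M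
    using tail_integral_le[of d \<sigma> M] assms \<open>0 < \<tau>\<close> pi_gt_zero
    by (simp add: r_def \<rho>_def power_divide)
  have mass: "(\<kappa> - pi * r ^ M) * \<tau> ^ M \<le> integral {0..pi} (spectral_weight \<sigma> M)" for M
    using spectral_mass_ge[of \<sigma> d M] tail[of M] assms
    unfolding \<kappa>_def \<tau>_def by (simp add: algebra_simps)
  have small: "(\<lambda>M. pi * r ^ M) \<longlonglongrightarrow> 0"
    using \<open>0 \<le> r\<close> \<open>r < 1\<close> by (intro tendsto_mult_right_zero LIMSEQ_power_zero) auto
  then have "(\<lambda>M. pi * r ^ M / (\<kappa> - pi * r ^ M)) \<longlonglongrightarrow> 0 / (\<kappa> - 0)"
    using \<open>0 < \<kappa>\<close> by (intro tendsto_intros) auto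
  then have bound: "(\<lambda>M. pi * r ^ M / (\<kappa> - pi * r ^ M)) \<longlonglongrightarrow> 0"
    by simp
  show ?thesis
  proof (rule tendsto_sandwich[OF _ _ tendsto_const bound])
    show "\<forall>\<^sub>F M in sequentially. 0 \<le> tail_integral \<sigma> M d / integral {0..pi} (spectral_weight \<sigma> M)"
      using spectral_mass_pos[OF assms(1)] tail_integral_nonneg by (simp add: less_imp_le)
    show "\<forall>\<^sub>F M in sequentially. tail_integral \<sigma> M d / integral {0..pi} (spectral_weight \<sigma> M)
                                \<le> pi * r ^ M / (\<kappa> - pi * r ^ M)"
      using order_tendstoD(2)[OF small \<open>0 < \<kappa>\<close>]
    proof eventually_elim
      case (elim M)
      have "tail_integral \<sigma> M d / integral {0..pi} (spectral_weight \<sigma> M)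
          \<le> (pi * r ^ M * \<tau> ^ M) / ((\<kappa> - pi * r ^ M) * \<tau> ^ M)"
        using elim \<open>0 < \<tau>\<close> \<open>0 \<le> r\<close> tail mass tail_integral_nonneg by (intro frac_le) auto
      then show ?case
        using \<open>0 < \<tau>\<close> by simp
    qed
  qed
qed

lemma obtain_small_radius:
  assumes "\<sigma> > 0" "e > 0"
  obtains d where "0 < d" "d < e" "d \<le> pi / 2" "1 - \<sigma> < cos d"
proof -
  have "((\<lambda>d. cos d) \<longlongrightarrow> cos 0) (at_right (0::real))"
    by (intro tendsto_intros)
  then have "\<forall>\<^sub>F d in at_right 0. 1 - \<sigma> < cos d"
    using assms by (intro order_tendstoD(1)) auto
  moreover have "\<forall>\<^sub>F d in at_right 0. d \<in> {0<..<min e (pi / 2)}"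
    using assms pi_gt_zero by (intro eventually_at_right_real) auto
  ultimately have "\<forall>\<^sub>F d in at_right 0. 0 < d \<and> d < e \<and> d \<le> pi / 2 \<and> 1 - \<sigma> < cos d"
    by eventually_elim auto
  then show ?thesis
    using that eventually_happens'[OF trivial_limit_at_right_real] by blast
qed

lemma integral_head_deviation_le:
  assumes "\<sigma> \<ge> 0" "0 \<le> d" "d \<le> pi / 2" "continuous_on {0..d} \<phi>"
    and near: "\<And>t. t \<in> {0..d} \<Longrightarrow> \<bar>\<phi> t - c\<bar> \<le> \<epsilon>"
  shows "\<bar>integral {0..d} (\<lambda>t. spectral_weight \<sigma> M t * (\<phi> t - c))\<bar>
           \<le> \<epsilon> * (integral {0..pi} (spectral_weight \<sigma> M) + tail_integral \<sigma> M d)"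
proof -
  have "0 \<le> \<epsilon>"
    using near[of 0] assms(2) abs_ge_zero[of "\<phi> 0 - c"] by simp
  have "norm (integral {0..d} (\<lambda>t. spectral_weight \<sigma> M t * (\<phi> t - c)))
      \<le> integral {0..d} (\<lambda>t. \<epsilon> * spectral_weight \<sigma> M t)"
  proof (rule integral_norm_bound_integral)
    show "(\<lambda>t. spectral_weight \<sigma> M t * (\<phi> t - c)) integrable_on {0..d}"
      using assms(4) by (intro integrable_continuous_real continuous_intros)
    show "(\<lambda>t. \<epsilon> * spectral_weight \<sigma> M t) integrable_on {0..d}"
      by (intro integrable_continuous_real continuous_intros)
    fix t assume "t \<in> {0..d}"
    then have "0 \<le> spectral_weight \<sigma> M t" "\<bar>\<phi> t - c\<bar> \<le> \<epsilon>"
      using assms near by (auto intro!: spectral_weight_nonneg)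
    then show "norm (spectral_weight \<sigma> M t * (\<phi> t - c)) \<le> \<epsilon> * spectral_weight \<sigma> M t"
      by (simp add: abs_mult mult.commute[of \<epsilon>] mult_left_mono)
  qed
  also have "\<dots> \<le> \<epsilon> * (integral {0..pi} (spectral_weight \<sigma> M) + tail_integral \<sigma> M d)"
    using spectral_mass_minus_head[of d \<sigma> M] assms \<open>0 \<le> \<epsilon>\<close> pi_gt_zero
    by (auto intro!: mult_left_mono)
  finally show ?thesis
    by simp
qed

lemma integral_tail_deviation_le:
  assumes "continuous_on {d..pi} \<phi>" and far: "\<And>t. t \<in> {d..pi} \<Longrightarrow> \<bar>\<phi> t - c\<bar> \<le> B"
  shows "\<bar>integral {d..pi} (\<lambda>t. spectral_weight \<sigma> M t * (\<phi> t - c))\<bar> \<le> B * tail_integral \<sigma> M d"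
proof -
  have "norm (integral {d..pi} (\<lambda>t. spectral_weight \<sigma> M t * (\<phi> t - c)))
      \<le> integral {d..pi} (\<lambda>t. B * \<bar>spectral_weight \<sigma> M t\<bar>)"
  proof (rule integral_norm_bound_integral)
    show "(\<lambda>t. spectral_weight \<sigma> M t * (\<phi> t - c)) integrable_on {d..pi}"
      using assms(1) by (intro integrable_continuous_real continuous_intros)
    show "(\<lambda>t. B * \<bar>spectral_weight \<sigma> M t\<bar>) integrable_on {d..pi}"
      by (intro integrable_continuous_real continuous_intros)
    fix t assume "t \<in> {d..pi}"
    then show "norm (spectral_weight \<sigma> M t * (\<phi> t - c)) \<le> B * \<bar>spectral_weight \<sigma> M t\<bar>"
      using far by (simp add: abs_mult mult.commute[of B] mult_left_mono)
  qed
  then show ?thesis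
    by (simp add: tail_integral_def)
qed

lemma spectral_deviation_le:
  assumes "\<sigma> \<ge> 0" "0 \<le> d" "d \<le> pi / 2" and \<phi>: "continuous_on {0..pi} \<phi>"
    and "\<And>t. t \<in> {0..d} \<Longrightarrow> \<bar>\<phi> t - c\<bar> \<le> \<epsilon>" "\<And>t. t \<in> {d..pi} \<Longrightarrow> \<bar>\<phi> t - c\<bar> \<le> B"
  shows "\<bar>integral {0..pi} (\<lambda>t. spectral_weight \<sigma> M t * \<phi> t)
            - c * integral {0..pi} (spectral_weight \<sigma> M)\<bar>
           \<le> \<epsilon> * (integral {0..pi} (spectral_weight \<sigma> M) + tail_integral \<sigma> M d)
             + B * tail_integral \<sigma> M d"
proof -
  let ?D = "\<lambda>t. spectral_weight \<sigma> M t * (\<phi> t - c)"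
  have "d \<le> pi"
    using assms(3) pi_gt_zero by linarith
  have "integral {0..pi} (\<lambda>t. spectral_weight \<sigma> M t * \<phi> t) - c * integral {0..pi} (spectral_weight \<sigma> M)
      = integral {0..pi} (\<lambda>t. spectral_weight \<sigma> M t * \<phi> t)
        - integral {0..pi} (\<lambda>t. spectral_weight \<sigma> M t * c)"
    by (simp add: mult.commute)
  also have "\<dots> = integral {0..pi} ?D"
    unfolding right_diff_distrib using \<phi>
    by (intro integral_diff[symmetric] integrable_continuous_real continuous_intros)
  also have "\<dots> = integral {0..d} ?D + integral {d..pi} ?D"
    using assms(2) \<open>d \<le> pi\<close> \<phi>
    by (intro Henstock_Kurzweil_Integration.integral_combine[symmetric] integrable_continuous_real
          continuous_intros)
  finally have split: "integral {0..pi} (\<lambda>t. spectral_weight \<sigma> M t * \<phi> t)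
      - c * integral {0..pi} (spectral_weight \<sigma> M) = integral {0..d} ?D + integral {d..pi} ?D" .
  have "continuous_on {0..d} \<phi>" "continuous_on {d..pi} \<phi>"
    using assms(2) \<open>d \<le> pi\<close> by (auto intro: continuous_on_subset[OF \<phi>])
  then have "\<bar>integral {0..d} ?D\<bar> \<le> \<epsilon> * (integral {0..pi} (spectral_weight \<sigma> M) + tail_integral \<sigma> M d)"
    "\<bar>integral {d..pi} ?D\<bar> \<le> B * tail_integral \<sigma> M d"
    using assms by (intro integral_head_deviation_le integral_tail_deviation_le; simp)+
  then show ?thesis
    unfolding split using abs_triangle_ineq[of "integral {0..d} ?D" "integral {d..pi} ?D"] by linarith
qed

text \<open>As \<open>M \<rightarrow> \<infinity>\<close> the weight \<open>(\<sigma> + 2 cos t)\<^sup>M sin\<^sup>2 t\<close> concentrates at \<open>t = 0\<close>, where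
  \<open>\<sigma> + 2 cos t\<close> attains its maximal modulus \<open>\<sigma> + 2\<close> on \<open>[0, \<pi>]\<close>.\<close>
lemma spectral_concentration:
  assumes "\<sigma> > 0" and \<phi>: "continuous_on {0..pi} \<phi>"
  shows "(\<lambda>M. integral {0..pi} (\<lambda>t. spectral_weight \<sigma> M t * \<phi> t)
              / integral {0..pi} (spectral_weight \<sigma> M)) \<longlonglongrightarrow> \<phi> 0"
proof (rule tendstoI)
  fix r :: real assume "r > 0"
  define \<epsilon> where "\<epsilon> = r / 2"
  obtain B where B: "\<forall>t\<in>{0..pi}. \<bar>\<phi> t\<bar> \<le> B"
    using compact_imp_bounded[OF compact_continuous_image[OF \<phi> compact_Icc]]
    by (auto simp: bounded_iff)
  obtain e where "e > 0" and e: "\<And>t. t \<in> {0..pi} \<Longrightarrow> \<bar>t\<bar> < e \<Longrightarrow> \<bar>\<phi> t - \<phi> 0\<bar> < \<epsilon>"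
    using \<phi> \<open>r > 0\<close> pi_gt_zero unfolding continuous_on_iff \<epsilon>_def dist_real_def
    by (metis atLeastAtMost_iff diff_zero half_gt_zero less_eq_real_def)
  obtain d where d: "0 < d" "d < e" "d \<le> pi / 2" "1 - \<sigma> < cos d"
    using obtain_small_radius[OF assms(1) \<open>e > 0\<close>] .
  define q where "q M = tail_integral \<sigma> M d / integral {0..pi} (spectral_weight \<sigma> M)" for M
  have "(\<lambda>M. \<epsilon> * (1 + q M) + 2 * B * q M) \<longlonglongrightarrow> \<epsilon> * (1 + 0) + 2 * B * 0"
    unfolding q_def by (intro tendsto_intros tail_ratio_tendsto_0 assms d)
  then have "\<forall>\<^sub>F M in sequentially. \<epsilon> * (1 + q M) + 2 * B * q M < r"
    by (rule order_tendstoD) (use \<open>r > 0\<close> in \<open>simp add: \<epsilon>_def\<close>)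
  then show "\<forall>\<^sub>F M in sequentially.
      dist (integral {0..pi} (\<lambda>t. spectral_weight \<sigma> M t * \<phi> t) / integral {0..pi} (spectral_weight \<sigma> M))
           (\<phi> 0) < r"
  proof eventually_elim
    case (elim M)
    let ?J = "integral {0..pi} (spectral_weight \<sigma> M)"
    have "?J > 0" using spectral_mass_pos[OF assms(1)] .
    have "\<bar>integral {0..pi} (\<lambda>t. spectral_weight \<sigma> M t * \<phi> t) - \<phi> 0 * ?J\<bar>
        \<le> \<epsilon> * (?J + tail_integral \<sigma> M d) + 2 * B * tail_integral \<sigma> M d"
    proof (rule spectral_deviation_le)
      show "\<bar>\<phi> t - \<phi> 0\<bar> \<le> \<epsilon>" if "t \<in> {0..d}" for t
        using that d pi_gt_zero by (intro less_imp_le e) auto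
      show "\<bar>\<phi> t - \<phi> 0\<bar> \<le> 2 * B" if "t \<in> {d..pi}" for t
      proof -
        have "\<bar>\<phi> t\<bar> \<le> B" "\<bar>\<phi> 0\<bar> \<le> B"
          using that d B pi_gt_zero by auto
        then show ?thesis
          using abs_triangle_ineq4[of "\<phi> t" "\<phi> 0"] by linarith
      qed
    qed (use assms d in auto)
    then have "dist (integral {0..pi} (\<lambda>t. spectral_weight \<sigma> M t * \<phi> t) / ?J) (\<phi> 0)
        \<le> \<epsilon> * (1 + q M) + 2 * B * q M"
      using \<open>?J > 0\<close> by (simp add: q_def dist_real_def field_simps)
    then show ?case using elim by linarith
  qed
qed

lemma spectral_integral_eq_chebyshev_U:
  "spectral_integral \<sigma> M a b
     = integral {0..pi} (\<lambda>t. spectral_weight \<sigma> M t * (chebyshev_U a (cos t) * chebyshev_U b (cos t)))"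
  unfolding spectral_integral_def spectral_weight_def sin_Suc_mult_eq_chebyshev_U
  by (simp add: power2_eq_square ac_simps)

lemma bridge_ratio_tendsto:
  assumes "\<sigma> > 0"
  shows "(\<lambda>M. bridge_weight \<sigma> M a b / bridge_weight \<sigma> M 0 0) \<longlonglongrightarrow> (real a + 1) * (real b + 1)"
proof -
  have "(\<lambda>M. integral {0..pi}
            (\<lambda>t. spectral_weight \<sigma> M t * (chebyshev_U a (cos t) * chebyshev_U b (cos t)))
          / integral {0..pi} (spectral_weight \<sigma> M))
        \<longlonglongrightarrow> chebyshev_U a (cos 0) * chebyshev_U b (cos 0)"
    by (intro spectral_concentration assms continuous_intros)
  then show ?thesis
    by (simp add: bridge_weight_spectral spectral_integral_0_0 chebyshev_U_1
                  spectral_integral_eq_chebyshev_U[of \<sigma> _ a b])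
qed

lemma abs_spectral_integral_le:
  "\<bar>spectral_integral \<sigma> M a b\<bar>
     \<le> (real a + 1) * (real b + 1) * integral {0..pi} (\<lambda>t. \<bar>spectral_weight \<sigma> M t\<bar>)"
proof -
  have "norm (spectral_integral \<sigma> M a b)
      \<le> integral {0..pi} (\<lambda>t. (real a + 1) * (real b + 1) * \<bar>spectral_weight \<sigma> M t\<bar>)"
    unfolding spectral_integral_def
  proof (intro integral_norm_bound_integral ballI integrable_continuous_real continuous_intros)
    fix t
    have "\<bar>sin ((real a + 1) * t) * sin ((real b + 1) * t)\<bar>
        \<le> ((real a + 1) * \<bar>sin t\<bar>) * ((real b + 1) * \<bar>sin t\<bar>)"
      unfolding abs_mult by (intro mult_mono abs_sin_Suc_mult_le) auto
    then have "\<bar>\<sigma> + 2 * cos t\<bar> ^ M * \<bar>sin ((real a + 1) * t) * sin ((real b + 1) * t)\<bar>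
        \<le> \<bar>\<sigma> + 2 * cos t\<bar> ^ M * ((real a + 1) * (real b + 1) * (sin t)\<^sup>2)"
      by (intro mult_left_mono) (auto simp: power2_eq_square algebra_simps)
    then show "norm ((\<sigma> + 2 * cos t) ^ M * sin ((real a + 1) * t) * sin ((real b + 1) * t))
        \<le> (real a + 1) * (real b + 1) * \<bar>spectral_weight \<sigma> M t\<bar>"
      by (simp add: spectral_weight_def abs_mult power_abs algebra_simps)
  qed
  then show ?thesis by simp
qed

lemma eventually_bridge_weight_le:
  assumes "\<sigma> > 0"
  shows "\<forall>\<^sub>F M in sequentially. \<forall>a b.
           bridge_weight \<sigma> M a b \<le> 2 * (real a + 1) * (real b + 1) * bridge_weight \<sigma> M 0 0"
proof -
  obtain d where d: "0 < d" "d \<le> pi / 2" "1 - \<sigma> < cos d"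
    using obtain_small_radius[OF assms zero_less_one] by metis
  have "\<forall>\<^sub>F M in sequentially.
          tail_integral \<sigma> M d / integral {0..pi} (spectral_weight \<sigma> M) < 1 / 2"
    by (rule order_tendstoD(2)[OF tail_ratio_tendsto_0]) (use assms d in auto)
  then show ?thesis
  proof eventually_elim
    case (elim M)
    let ?J = "integral {0..pi} (spectral_weight \<sigma> M)"
    have "?J > 0" using spectral_mass_pos[OF assms] .
    then have "integral {0..pi} (\<lambda>t. \<bar>spectral_weight \<sigma> M t\<bar>) \<le> 2 * ?J"
      using integral_abs_spectral_weight_le[of \<sigma> d M] elim assms d by (simp add: field_simps)
    have "spectral_integral \<sigma> M a b \<le> (real a + 1) * (real b + 1) * (2 * ?J)" for a b
    proof -
      have "(real a + 1) * (real b + 1) * integral {0..pi} (\<lambda>t. \<bar>spectral_weight \<sigma> M t\<bar>)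
          \<le> (real a + 1) * (real b + 1) * (2 * ?J)"
        using \<open>integral {0..pi} (\<lambda>t. \<bar>spectral_weight \<sigma> M t\<bar>) \<le> 2 * ?J\<close> by (intro mult_left_mono) auto
      then show ?thesis
        using abs_spectral_integral_le[of \<sigma> M a b] abs_ge_self[of "spectral_integral \<sigma> M a b"] by linarith
    qed
    then have "2 / pi * spectral_integral \<sigma> M a b \<le> 2 / pi * ((real a + 1) * (real b + 1) * (2 * ?J))"
      for a b by (intro mult_left_mono) auto
    then show ?case
      by (simp add: bridge_weight_spectral spectral_integral_0_0 algebra_simps)
  qed
qed

section \<open>Sums over nearest-neighbour walks\<close>

lemma has_sum_Sigma_nonneg:
  fixes f :: "'a \<times> 'b \<Rightarrow> real"
  assumes fibres: "\<And>x. x \<in> A \<Longrightarrow> ((\<lambda>y. f (x, y)) has_sum g x) (B x)"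
    and total: "(g has_sum S) A"
    and nonneg: "\<And>x y. x \<in> A \<Longrightarrow> y \<in> B x \<Longrightarrow> f (x, y) \<ge> 0"
  shows "(f has_sum S) (Sigma A B)"
  using fibres total
proof (rule has_sum_SigmaI)
  show "f summable_on Sigma A B"
    using fibres total nonneg by (intro summable_on_SigmaI[where g = g]) (auto dest: has_sum_imp_summable)
qed

definition nbhd :: "nat \<Rightarrow> nat set" where
  "nbhd a = {a - 1..Suc a}"

lemma finite_nbhd [simp]: "finite (nbhd a)"
  by (simp add: nbhd_def)

definition nearest_neighbour_kernel :: "(nat \<Rightarrow> nat \<Rightarrow> real) \<Rightarrow> bool" where
  "nearest_neighbour_kernel S \<longleftrightarrow> (\<forall>a b. 0 \<le> S a b \<and> (b \<notin> nbhd a \<longrightarrow> S a b = 0))"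

text \<open>\<open>walk_sum S c v n a\<close> sums, over all walks \<open>a = z\<^sub>0, z\<^sub>1, \<dots>, z\<^sub>n\<close>, the product of the step
  weights \<open>S z\<^sub>k\<^sub>-\<^sub>1 z\<^sub>k\<close>, the site weights \<open>c k z\<^sub>k\<close> (\<open>1 \<le> k \<le> n\<close>) and the end weight \<open>v z\<^sub>n\<close>;
  \<open>walk_weight\<close> is the summand.\<close>
fun walk_sum ::
  "(nat \<Rightarrow> nat \<Rightarrow> real) \<Rightarrow> (nat \<Rightarrow> nat \<Rightarrow> real) \<Rightarrow> (nat \<Rightarrow> real) \<Rightarrow> nat \<Rightarrow> nat \<Rightarrow> real" where
  "walk_sum S c v 0 a = v a"
| "walk_sum S c v (Suc n) a = (\<Sum>b\<in>nbhd a. S a b * c 1 b * walk_sum S (\<lambda>k. c (Suc k)) v n b)"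

definition walk_weight ::
  "(nat \<Rightarrow> nat \<Rightarrow> real) \<Rightarrow> (nat \<Rightarrow> nat \<Rightarrow> real) \<Rightarrow> (nat \<Rightarrow> real) \<Rightarrow> nat \<Rightarrow> nat list \<Rightarrow> real" where
  "walk_weight S c v n z = (\<Prod>k\<in>{1..n}. c k (z ! k)) * (\<Prod>k<n. S (z ! k) (z ! Suc k)) * v (z ! n)"

lemma nearest_neighbour_kernel_nonneg: "nearest_neighbour_kernel S \<Longrightarrow> 0 \<le> S a b"
  unfolding nearest_neighbour_kernel_def by blast

lemma walk_weight_Cons:
  "walk_weight S c v (Suc n) (a # z) = S a (z ! 0) * c 1 (z ! 0) * walk_weight S (\<lambda>k. c (Suc k)) v n z"
proof -
  have "(\<Prod>k\<in>{1..Suc n}. c k ((a # z) ! k)) = c 1 (z ! 0) * (\<Prod>k\<in>{1..n}. c (Suc k) (z ! k))"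
    using prod.shift_bounds_cl_Suc_ivl[of "\<lambda>k. c k ((a # z) ! k)" 0 n]
    by (simp add: prod.atLeast_Suc_atMost)
  moreover have "(\<Prod>k<Suc n. S ((a # z) ! k) ((a # z) ! Suc k))
      = S a (z ! 0) * (\<Prod>k<n. S (z ! k) (z ! Suc k))"
    by (subst prod.lessThan_Suc_shift) simp
  ultimately show ?thesis
    unfolding walk_weight_def by simp
qed

lemma walk_sum_nonneg:
  assumes "nearest_neighbour_kernel S" "\<And>k b. c k b \<ge> 0" "\<And>b. v b \<ge> 0"
  shows "walk_sum S c v n a \<ge> 0"
  using assms(2) by (induction n arbitrary: a c)
    (auto intro!: sum_nonneg mult_nonneg_nonneg assms(3) nearest_neighbour_kernel_nonneg[OF assms(1)])

lemma walk_weight_nonneg: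
  assumes "nearest_neighbour_kernel S" "\<And>k b. c k b \<ge> 0" "\<And>b. v b \<ge> 0"
  shows "walk_weight S c v n z \<ge> 0"
  unfolding walk_weight_def
  by (auto intro!: mult_nonneg_nonneg prod_nonneg assms(2,3) nearest_neighbour_kernel_nonneg[OF assms(1)])

lemma has_sum_walk_weight_from:
  assumes S: "nearest_neighbour_kernel S" and c: "\<And>k b. c k b \<ge> 0" and v: "\<And>b. v b \<ge> 0"
  shows "(walk_weight S c v n has_sum walk_sum S c v n a) {z. length z = Suc n \<and> z ! 0 = a}"
  using c
proof (induction n arbitrary: a c)
  case 0
  have "{z. length z = Suc 0 \<and> z ! 0 = a} = {[a]}"
    by (auto simp: length_Suc_conv)
  then show ?case
    using has_sum_finite[of "{[a]}" "\<lambda>z. v (z ! 0)"] by (simp add: walk_weight_def[abs_def])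
next
  case (Suc n)
  let ?c = "\<lambda>k. c (Suc k)"
  define B where "B b = {z :: nat list. length z = Suc n \<and> z ! 0 = b}" for b :: nat
  define F where "F p = S a (fst p) * c 1 (fst p) * walk_weight S ?c v n (snd p)" for p
  have "((\<lambda>b. S a b * c 1 b * walk_sum S ?c v n b) has_sum walk_sum S c v (Suc n) a) (nbhd a)"
    by (simp add: has_sum_finite)
  then have outer: "((\<lambda>b. S a b * c 1 b * walk_sum S ?c v n b) has_sum walk_sum S c v (Suc n) a) UNIV"
    by (rule has_sum_cong_neutral[THEN iffD1, rotated -1])
       (use S in \<open>auto simp: nearest_neighbour_kernel_def\<close>)
  have F: "(F has_sum walk_sum S c v (Suc n) a) (Sigma UNIV B)"
  proof (rule has_sum_Sigma_nonneg[OF _ outer])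
    show "((\<lambda>z. F (b, z)) has_sum S a b * c 1 b * walk_sum S ?c v n b) (B b)" for b
      unfolding F_def B_def using Suc by (simp add: has_sum_cmult_right)
    show "0 \<le> F (b, z)" for b z
      unfolding F_def
      by (auto intro!: mult_nonneg_nonneg walk_weight_nonneg[OF S] nearest_neighbour_kernel_nonneg[OF S]
            Suc.prems v)
  qed
  define h where "h p = a # snd p" for p :: "nat \<times> nat list"
  have inj: "inj_on h (Sigma UNIV B)"
    unfolding h_def B_def by (rule inj_onI) auto
  have img: "h ` Sigma UNIV B = {z. length z = Suc (Suc n) \<and> z ! 0 = a}"
  proof safe
    fix z assume "length z = Suc (Suc n)" "a = z ! 0"
    then obtain z' where "z = a # z'" "length z' = Suc n" by (cases z) auto
    then show "z \<in> h ` Sigma UNIV B"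
      unfolding h_def B_def by (intro image_eqI[of _ _ "(z' ! 0, z')"]) auto
  qed (auto simp: h_def B_def)
  have "(walk_weight S c v (Suc n) \<circ> h) p = F p" if "p \<in> Sigma UNIV B" for p
    using that unfolding h_def F_def B_def by (cases p) (simp add: walk_weight_Cons)
  then have "((walk_weight S c v (Suc n) \<circ> h) has_sum walk_sum S c v (Suc n) a) (Sigma UNIV B)"
    using F by (simp cong: has_sum_cong)
  then show ?case
    unfolding has_sum_reindex[OF inj, symmetric] img .
qed

lemma has_sum_walk_weight_iff:
  assumes S: "nearest_neighbour_kernel S" and c: "\<And>k b. c k b \<ge> 0" and v: "\<And>b. v b \<ge> 0"
    and u: "\<And>a. u a \<ge> 0"
  shows "((\<lambda>z. u (z ! 0) * walk_weight S c v n z) has_sum X) {z. length z = Suc n}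
     \<longleftrightarrow> ((\<lambda>a. u a * walk_sum S c v n a) has_sum X) UNIV"
proof -
  define B where "B a = {z :: nat list. length z = Suc n \<and> z ! 0 = a}" for a :: nat
  define f where "f p = u (snd p ! 0) * walk_weight S c v n (snd p)" for p :: "nat \<times> nat list"
  have fibres: "((\<lambda>z. f (a, z)) has_sum u a * walk_sum S c v n a) (B a)" for a
  proof -
    have "((\<lambda>z. u a * walk_weight S c v n z) has_sum u a * walk_sum S c v n a) (B a)"
      unfolding B_def by (intro has_sum_cmult_right has_sum_walk_weight_from S c v)
    then show ?thesis
      unfolding f_def by (rule has_sum_cong[THEN iffD1, rotated]) (simp add: B_def)
  qed
  have inj: "inj_on snd (Sigma UNIV B)"
    unfolding B_def by (rule inj_onI) auto
  have img: "snd ` Sigma UNIV B = {z. length z = Suc n}"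
  proof safe
    fix z :: "nat list" assume "length z = Suc n"
    then show "z \<in> snd ` Sigma UNIV B"
      unfolding B_def by (intro image_eqI[of _ _ "(z ! 0, z)"]) auto
  qed (auto simp: B_def)
  have "((\<lambda>z. u (z ! 0) * walk_weight S c v n z) has_sum X) {z. length z = Suc n}
      \<longleftrightarrow> (f has_sum X) (Sigma UNIV B)"
    unfolding img[symmetric] has_sum_reindex[OF inj] by (simp add: f_def[abs_def] o_def)
  also have "\<dots> \<longleftrightarrow> ((\<lambda>a. u a * walk_sum S c v n a) has_sum X) UNIV"
  proof
    assume "(f has_sum X) (Sigma UNIV B)"
    then show "((\<lambda>a. u a * walk_sum S c v n a) has_sum X) UNIV"
      using fibres by (rule has_sum_SigmaD)
  next
    assume "((\<lambda>a. u a * walk_sum S c v n a) has_sum X) UNIV"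
    then show "(f has_sum X) (Sigma UNIV B)"
      by (intro has_sum_Sigma_nonneg[OF fibres])
         (auto simp: f_def intro!: mult_nonneg_nonneg walk_weight_nonneg[OF S] c v u)
  qed
  finally show ?thesis .
qed

lemma walk_sum_cong:
  assumes "\<And>k b. k \<in> {1..n} \<Longrightarrow> c k b = c' k b"
  shows "walk_sum S c v n a = walk_sum S c' v n a"
  using assms
proof (induction n arbitrary: a c c')
  case (Suc n)
  have "walk_sum S (\<lambda>k. c (Suc k)) v n b = walk_sum S (\<lambda>k. c' (Suc k)) v n b" for b
    by (rule Suc.IH) (use Suc.prems in auto)
  moreover have "c 1 b = c' 1 b" for b
    using Suc.prems by auto
  ultimately show ?case by simp
qed simp

lemma walk_sum_add: "walk_sum S c v (n + m) a = walk_sum S c (walk_sum S (\<lambda>k. c (k + n)) v m) n a"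
proof (induction n arbitrary: a c)
  case (Suc n)
  have "walk_sum S (\<lambda>k. c (Suc k)) v (n + m) b
      = walk_sum S (\<lambda>k. c (Suc k)) (walk_sum S (\<lambda>k. c (k + Suc n)) v m) n b" for b
    using Suc.IH[of "\<lambda>k. c (Suc k)" b] by simp
  then show ?case by simp
qed simp

lemma walk_sum_last:
  "walk_sum S c v (Suc n) a = walk_sum S (c(Suc n := (\<lambda>_. 1))) (\<lambda>b. c (Suc n) b * v b) (Suc n) a"
proof (induction n arbitrary: a c)
  case 0
  then show ?case by (simp add: mult.assoc)
next
  case (Suc n)
  have "(\<lambda>k. (c(Suc (Suc n) := (\<lambda>_. 1))) (Suc k)) = (\<lambda>k. c (Suc k))(Suc n := (\<lambda>_. 1))"
    by (rule ext) simp
  moreover have "walk_sum S (\<lambda>k. c (Suc k)) v (Suc n) b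
      = walk_sum S ((\<lambda>k. c (Suc k))(Suc n := (\<lambda>_. 1))) (\<lambda>b. c (Suc (Suc n)) b * v b) (Suc n) b" for b
    using Suc.IH[of "\<lambda>k. c (Suc k)" b] by simp
  ultimately show ?case
    by (subst (1 2) walk_sum.simps) simp
qed

lemma walk_sum_mono:
  assumes S: "nearest_neighbour_kernel S"
    and c: "\<And>k b. 0 \<le> c k b" "\<And>k b. c k b \<le> c' k b" and v: "\<And>b. 0 \<le> v b" "\<And>b. v b \<le> v' b"
  shows "walk_sum S c v n a \<le> walk_sum S c' v' n a"
  using c
proof (induction n arbitrary: a c c')
  case 0
  then show ?case using v by simp
next
  case (Suc n)
  have "S a b * c 1 b * walk_sum S (\<lambda>k. c (Suc k)) v n b
      \<le> S a b * c' 1 b * walk_sum S (\<lambda>k. c' (Suc k)) v' n b"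
    for b
  proof -
    have "0 \<le> c' 1 b"
      using Suc.prems(1)[of 1 b] Suc.prems(2)[of 1 b] by linarith
    then show ?thesis
      using Suc.prems nearest_neighbour_kernel_nonneg[OF S, of a b]
      by (intro mult_mono Suc.IH walk_sum_nonneg[OF S] mult_nonneg_nonneg v) auto
  qed
  then show ?case
    by (simp add: sum_mono)
qed

lemma walk_sum_cmult: "walk_sum S c (\<lambda>b. r * v b) n a = r * walk_sum S c v n a"
  by (induction n arbitrary: a c) (auto simp: sum_distrib_left algebra_simps)

lemma tendsto_walk_sum:
  assumes "\<And>b. (\<lambda>M. v M b) \<longlonglongrightarrow> w b"
  shows "(\<lambda>M. walk_sum S c (v M) n a) \<longlonglongrightarrow> walk_sum S c w n a"
  by (induction n arbitrary: a c) (auto intro!: tendsto_intros assms)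

lemma walk_weight_rev:
  assumes sym: "\<And>a b. S a b = S b a" and len: "length z = Suc n"
  shows "u (z ! 0) * c 0 (z ! 0) * walk_weight S c v n z
       = v (rev z ! 0) * c n (rev z ! 0) * walk_weight S (\<lambda>k. c (n - k)) u n (rev z)"
proof -
  have rev_nth': "rev z ! k = z ! (n - k)" if "k \<le> n" for k
    using that len by (simp add: rev_nth)
  have "c 0 (z ! 0) * (\<Prod>k\<in>{1..n}. c k (z ! k)) = (\<Prod>k\<in>{0..n}. c k (z ! k))"
    by (simp add: prod.atLeast_Suc_atMost)
  moreover have "c n (rev z ! 0) * (\<Prod>k\<in>{1..n}. c (n - k) (rev z ! k))
      = (\<Prod>k\<in>{0..n}. c (n - k) (z ! (n - k)))"
    by (simp add: prod.atLeast_Suc_atMost rev_nth')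
  moreover have "(\<Prod>k\<in>{0..n}. c (n - k) (z ! (n - k))) = (\<Prod>k\<in>{0..n}. c k (z ! k))"
    using prod.atLeastAtMost_rev[of "\<lambda>k. c k (z ! k)" 0 n] by simp
  moreover have "(\<Prod>k<n. S (rev z ! k) (rev z ! Suc k)) = (\<Prod>k<n. S (z ! k) (z ! Suc k))"
  proof -
    have "(\<Prod>k<n. S (rev z ! k) (rev z ! Suc k)) = (\<Prod>k<n. (\<lambda>j. S (z ! Suc j) (z ! j)) (n - Suc k))"
      by (rule prod.cong) (auto simp: rev_nth' Suc_diff_Suc)
    also have "\<dots> = (\<Prod>j<n. S (z ! Suc j) (z ! j))"
      by (rule prod.nat_diff_reindex)
    also have "\<dots> = (\<Prod>j<n. S (z ! j) (z ! Suc j))"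
      by (simp add: sym)
    finally show ?thesis .
  qed
  moreover have "rev z ! n = z ! 0" "rev z ! 0 = z ! n"
    using rev_nth'[of n] rev_nth'[of 0] by simp_all
  ultimately show ?thesis
    unfolding walk_weight_def by (simp add: algebra_simps)
qed

lemma has_sum_walk_sum_transpose:
  assumes S: "nearest_neighbour_kernel S" and sym: "\<And>a b. S a b = S b a"
    and c: "\<And>k b. c k b \<ge> 0" and u: "\<And>a. u a \<ge> 0" and v: "\<And>b. v b \<ge> 0"
    and sum: "((\<lambda>a. u a * c 0 a * walk_sum S c v n a) has_sum X) UNIV"
  shows "((\<lambda>a. v a * c n a * walk_sum S (\<lambda>k. c (n - k)) u n a) has_sum X) UNIV"
proof -
  let ?Z = "{z :: nat list. length z = Suc n}"
  have "((\<lambda>z. (u (z ! 0) * c 0 (z ! 0)) * walk_weight S c v n z) has_sum X) ?Z"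
    using sum by (subst has_sum_walk_weight_iff) (use assms in auto)
  then have "((\<lambda>z. v (rev z ! 0) * c n (rev z ! 0) * walk_weight S (\<lambda>k. c (n - k)) u n (rev z))
      has_sum X) ?Z"
    by (rule has_sum_cong[THEN iffD1, rotated]) (rule walk_weight_rev[OF sym], simp)
  moreover have "inj_on rev ?Z" "rev ` ?Z = ?Z"
    by (auto intro!: inj_onI image_eqI[of _ rev "rev z" for z])
  ultimately have "((\<lambda>z. (v (z ! 0) * c n (z ! 0)) * walk_weight S (\<lambda>k. c (n - k)) u n z)
      has_sum X) ?Z"
    using has_sum_reindex[of rev ?Z
        "\<lambda>z. (v (z ! 0) * c n (z ! 0)) * walk_weight S (\<lambda>k. c (n - k)) u n z"]
    by (simp add: o_def)
  then show ?thesis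
    by (subst (asm) has_sum_walk_weight_iff) (use assms in auto)
qed

section \<open>The Motzkin step kernel\<close>

definition motzkin_step :: "real \<Rightarrow> nat \<Rightarrow> nat \<Rightarrow> real" where
  "motzkin_step \<sigma> a b = (if a = b then \<sigma> else if Suc a = b \<or> Suc b = a then 1 else 0)"

lemma sum_nbhd: "(\<Sum>b\<in>nbhd a. f b) = (if a = 0 then f 0 + f 1 else f (a - 1) + f a + f (Suc a))"
proof (cases a)
  case 0
  then have "nbhd a = {0, 1}" by (auto simp: nbhd_def)
  then show ?thesis using 0 by simp
next
  case (Suc a')
  then have "nbhd a = {a', Suc a', Suc (Suc a')}" by (auto simp: nbhd_def)
  then show ?thesis using Suc by (simp add: add.assoc)
qed

lemma nearest_neighbour_kernel_motzkin_step: "\<sigma> \<ge> 0 \<Longrightarrow> nearest_neighbour_kernel (motzkin_step \<sigma>)"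
  unfolding nearest_neighbour_kernel_def motzkin_step_def nbhd_def by auto

lemma motzkin_step_sym: "motzkin_step \<sigma> a b = motzkin_step \<sigma> b a"
  unfolding motzkin_step_def by auto

text \<open>The function \<open>b \<mapsto> b + 1\<close> is an eigenfunction of the Motzkin step kernel with eigenvalue
  \<open>2 + \<sigma>\<close>: at \<open>a = 0\<close> the missing down-step would contribute \<open>-1 + 1 = 0\<close> anyway.\<close>
lemma walk_sum_motzkin_step_harmonic:
  "walk_sum (motzkin_step \<sigma>) (\<lambda>_ _. 1) (\<lambda>b. real b + 1) n a = (2 + \<sigma>) ^ n * (real a + 1)"
proof (induction n arbitrary: a)
  case (Suc n)
  have "walk_sum (motzkin_step \<sigma>) (\<lambda>_ _. 1) (\<lambda>b. real b + 1) (Suc n) a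
      = (2 + \<sigma>) ^ n * (\<Sum>b\<in>nbhd a. motzkin_step \<sigma> a b * (real b + 1))"
    using Suc.IH by (simp add: sum_distrib_left algebra_simps)
  also have "(\<Sum>b\<in>nbhd a. motzkin_step \<sigma> a b * (real b + 1)) = (2 + \<sigma>) * (real a + 1)"
    unfolding sum_nbhd by (auto simp: motzkin_step_def algebra_simps of_nat_diff)
  finally show ?case
    by simp
qed simp

lemma walk_sum_motzkin_step_le:
  assumes "\<sigma> \<ge> 0" "\<And>k b. 0 \<le> c k b" "\<And>k b. c k b \<le> 1"
    and "\<And>b. 0 \<le> v b" "\<And>b. v b \<le> B * (real b + 1)"
  shows "walk_sum (motzkin_step \<sigma>) c v n a \<le> B * (2 + \<sigma>) ^ n * (real a + 1)"
proof -
  have "walk_sum (motzkin_step \<sigma>) c v n a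
      \<le> walk_sum (motzkin_step \<sigma>) (\<lambda>_ _. 1) (\<lambda>b. B * (real b + 1)) n a"
    by (rule walk_sum_mono) (use assms in \<open>auto intro: nearest_neighbour_kernel_motzkin_step\<close>)
  then show ?thesis
    by (simp add: walk_sum_cmult walk_sum_motzkin_step_harmonic)
qed

lemma weighted_walk_sum_motzkin_step_bounds:
  assumes "\<sigma> \<ge> 0" "w a \<ge> 0" "0 \<le> c0" "c0 \<le> 1" "\<And>k b. 0 \<le> c k b" "\<And>k b. c k b \<le> 1"
    and "\<And>b. 0 \<le> v b" "\<And>b. v b \<le> B * (real b + 1)"
  shows "0 \<le> w a * c0 * walk_sum (motzkin_step \<sigma>) c v n a"
    and "w a * c0 * walk_sum (motzkin_step \<sigma>) c v n a \<le> B * (2 + \<sigma>) ^ n * ((real a + 1) * w a)"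
proof -
  have "0 \<le> walk_sum (motzkin_step \<sigma>) c v n a"
    using assms by (intro walk_sum_nonneg nearest_neighbour_kernel_motzkin_step)
  then show "0 \<le> w a * c0 * walk_sum (motzkin_step \<sigma>) c v n a"
    using assms by simp
  have "w a * c0 * walk_sum (motzkin_step \<sigma>) c v n a \<le> w a * 1 * (B * (2 + \<sigma>) ^ n * (real a + 1))"
    using assms \<open>0 \<le> walk_sum (motzkin_step \<sigma>) c v n a\<close>
    by (intro mult_mono walk_sum_motzkin_step_le) auto
  then show "w a * c0 * walk_sum (motzkin_step \<sigma>) c v n a \<le> B * (2 + \<sigma>) ^ n * ((real a + 1) * w a)"
    by (simp add: ac_simps)
qed

lemma bridge_weight_step:
  "(\<Sum>c\<in>nbhd a. motzkin_step \<sigma> a c * bridge_weight \<sigma> M c b) = bridge_weight \<sigma> (Suc M) a b"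
  unfolding sum_nbhd by (cases a) (auto simp: motzkin_step_def)

lemma walk_sum_eq_bridge_weight:
  "walk_sum (motzkin_step \<sigma>) (\<lambda>_ _. 1) v M a = (\<Sum>b\<le>a + M. bridge_weight \<sigma> M a b * v b)"
proof (induction M arbitrary: a)
  case 0
  have "(\<Sum>b\<le>a. bridge_weight \<sigma> 0 a b * v b) = (\<Sum>b\<le>a. if b = a then v b else 0)"
    by (rule sum.cong) auto
  then show ?case by simp
next
  case (Suc M)
  have "(\<Sum>b\<le>c + M. bridge_weight \<sigma> M c b * v b) = (\<Sum>b\<le>a + Suc M. bridge_weight \<sigma> M c b * v b)"
    if "c \<in> nbhd a" for c
    using that unfolding nbhd_def by (intro sum.mono_neutral_left) (auto simp: bridge_weight_eq_0)
  then have "walk_sum (motzkin_step \<sigma>) (\<lambda>_ _. 1) v (Suc M) a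
      = (\<Sum>c\<in>nbhd a. motzkin_step \<sigma> a c * (\<Sum>b\<le>a + Suc M. bridge_weight \<sigma> M c b * v b))"
    using Suc.IH by simp
  also have "\<dots> = (\<Sum>b\<le>a + Suc M. (\<Sum>c\<in>nbhd a. motzkin_step \<sigma> a c * bridge_weight \<sigma> M c b) * v b)"
    by (simp add: sum_distrib_left sum_distrib_right sum.swap[of _ "nbhd a"] algebra_simps)
  finally show ?case
    by (simp add: bridge_weight_step)
qed

lemma has_sum_bridge_weight:
  "((\<lambda>b. bridge_weight \<sigma> M a b * v b) has_sum walk_sum (motzkin_step \<sigma>) (\<lambda>_ _. 1) v M a) UNIV"
proof -
  have "((\<lambda>b. bridge_weight \<sigma> M a b * v b) has_sum walk_sum (motzkin_step \<sigma>) (\<lambda>_ _. 1) v M a) {..a + M}"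
    unfolding walk_sum_eq_bridge_weight by (rule has_sum_finite) simp
  then show ?thesis
    by (rule has_sum_cong_neutral[THEN iffD1, rotated -1]) (auto simp: bridge_weight_eq_0)
qed

lemma prod_motzkin_step:
  assumes "length g = Suc L"
  shows "(\<Prod>k<L. motzkin_step \<sigma> (g ! k) (g ! Suc k))
           = (if g \<in> motzkin_paths L then path_weight \<sigma> L g else 0)"
proof (cases "g \<in> motzkin_paths L")
  case True
  then have "motzkin_step \<sigma> (g ! k) (g ! Suc k) = (if g ! Suc k = g ! k then \<sigma> else 1)" if "k < L" for k
    using that unfolding motzkin_paths_def motzkin_step_def by fastforce
  then have "(\<Prod>k<L. motzkin_step \<sigma> (g ! k) (g ! Suc k)) = (\<Prod>k<L. if g ! Suc k = g ! k then \<sigma> else 1)"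
    by (intro prod.cong) auto
  also have "\<dots> = \<sigma> ^ card {k. k < L \<and> g ! Suc k = g ! k}"
    by (simp add: prod.If_cases Int_def conj_commute)
  finally show ?thesis
    using True unfolding path_weight_def by simp
next
  case False
  then obtain k where k: "k < L" "\<not> \<bar>int (g ! Suc k) - int (g ! k)\<bar> \<le> 1"
    using assms unfolding motzkin_paths_def by auto
  then have "motzkin_step \<sigma> (g ! k) (g ! Suc k) = 0"
    unfolding motzkin_step_def by auto
  then show ?thesis
    using False k(1) by (auto intro!: prod_zero)
qed

text \<open>The chain \<^const>\<open>trans_P\<close> is Doob's transform of the Motzkin step kernel by its positive
  eigenfunction \<open>b \<mapsto> b + 1\<close>.\<close>
lemma trans_P_eq:
  assumes "\<sigma> > 0"
  shows "trans_P \<sigma> a b = motzkin_step \<sigma> a b * (real b + 1) / ((real a + 1) * (2 + \<sigma>))"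
proof -
  consider "b = Suc a" | "b = a" | "Suc b = a" | "b \<noteq> Suc a \<and> b \<noteq> a \<and> Suc b \<noteq> a"
    by blast
  then show ?thesis
    by cases (use assms in \<open>auto simp: trans_P_def motzkin_step_def ac_simps\<close>)
qed

lemma nearest_neighbour_kernel_trans_P: "\<sigma> > 0 \<Longrightarrow> nearest_neighbour_kernel (trans_P \<sigma>)"
  using nearest_neighbour_kernel_motzkin_step[of \<sigma>]
  by (auto simp: nearest_neighbour_kernel_def trans_P_eq)

lemma walk_sum_trans_P:
  assumes "\<sigma> > 0"
  shows "walk_sum (trans_P \<sigma>) c v n a
           = walk_sum (motzkin_step \<sigma>) c (\<lambda>b. (real b + 1) * v b) n a / ((real a + 1) * (2 + \<sigma>) ^ n)"
proof (induction n arbitrary: a c)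
  case (Suc n)
  have "trans_P \<sigma> a b * c 1 b * walk_sum (trans_P \<sigma>) (\<lambda>k. c (Suc k)) v n b
      = motzkin_step \<sigma> a b * c 1 b
          * walk_sum (motzkin_step \<sigma>) (\<lambda>k. c (Suc k)) (\<lambda>b. (real b + 1) * v b) n b
          / ((real a + 1) * (2 + \<sigma>) ^ Suc n)" for b
  proof -
    have cancel: "(s * f / (e * D)) * C * (X / (f * D ^ n)) = s * C * X / (e * D ^ Suc n)"
      if "e \<noteq> 0" "f \<noteq> 0" "D \<noteq> 0" for s f e D C X :: real
      using that by (simp add: field_simps)
    show ?thesis
      unfolding Suc.IH trans_P_eq[OF assms] using assms by (intro cancel) auto
  qed
  then show ?case
    by (simp add: sum_divide_distrib)
qed simp

section \<open>Cylinder probabilities of the limiting chain\<close>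

lemma summable_of_summable_real_mult:
  fixes w :: "nat \<Rightarrow> real"
  assumes "\<And>n. w n \<ge> 0" "summable (\<lambda>n. real n * w n)"
  shows "summable w"
proof (rule summable_comparison_test'[OF assms(2), of 1])
  fix n :: nat assume "n \<ge> 1"
  then show "norm (w n) \<le> real n * w n"
    using assms(1)[of n] mult_right_mono[of 1 "real n" "w n"] by simp
qed

lemma has_sum_real_plus_one_mult:
  fixes w :: "nat \<Rightarrow> real"
  assumes "\<And>n. w n \<ge> 0" "summable (\<lambda>n. real n * w n)"
  shows "((\<lambda>n. (real n + 1) * w n) has_sum (\<Sum>m. (real m + 1) * w m)) UNIV"
proof -
  have "summable (\<lambda>n. real n * w n + w n)"
    using assms summable_of_summable_real_mult[OF assms] by (intro summable_add)
  then show ?thesis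
    using assms(1) by (intro sums_nonneg_imp_has_sum summable_sums) (auto simp: distrib_right)
qed

lemma suminf_real_plus_one_mult_pos:
  fixes w :: "nat \<Rightarrow> real"
  assumes "\<And>n. w n \<ge> 0" "summable (\<lambda>n. real n * w n)" "\<exists>n. w n \<noteq> 0"
  shows "(\<Sum>m. (real m + 1) * w m) > 0"
proof -
  obtain i where "w i \<noteq> 0" using assms(3) by blast
  then show ?thesis
    using has_sum_real_plus_one_mult[OF assms(1,2)] assms(1)
    by (intro suminf_pos2[of _ i]) (auto dest: has_sum_imp_sums sums_summable simp: less_le)
qed

definition pin :: "nat set \<Rightarrow> (nat \<Rightarrow> nat) \<Rightarrow> nat \<Rightarrow> nat \<Rightarrow> real" where
  "pin I x k v = (if k \<in> I \<longrightarrow> v = x k then 1 else 0)"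

lemma pin_nonneg: "pin I x k v \<ge> 0" and pin_le_1: "pin I x k v \<le> 1"
  unfolding pin_def by auto

lemma pin_empty: "pin {} x = (\<lambda>_ _. 1)"
  unfolding pin_def by (intro ext) simp

lemma prod_if_one_zero:
  "finite A \<Longrightarrow> (\<Prod>k\<in>A. if P k then 1 else 0 :: real) = (if \<forall>k\<in>A. P k then 1 else 0)"
  by (induction A rule: finite_induct) auto

lemma prod_pin:
  assumes "I \<subseteq> {..K}"
  shows "pin I x 0 (z ! 0) * (\<Prod>k\<in>{1..K}. pin I x k (z ! k)) = (if \<forall>k\<in>I. z ! k = x k then 1 else 0)"
proof -
  have "pin I x 0 (z ! 0) * (\<Prod>k\<in>{1..K}. pin I x k (z ! k)) = (\<Prod>k\<in>{0..K}. pin I x k (z ! k))"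
    by (simp add: prod.atLeast_Suc_atMost)
  also have "\<dots> = (if \<forall>k\<in>{0..K}. k \<in> I \<longrightarrow> z ! k = x k then 1 else 0)"
    unfolding pin_def by (rule prod_if_one_zero) simp
  finally show ?thesis
    using assms by auto
qed

lemma walk_weight_pin:
  assumes "I \<subseteq> {..K}"
  shows "u * pin I x 0 (z ! 0) * walk_weight S (pin I x) (\<lambda>_. 1) K z
           = (if \<forall>k\<in>I. z ! k = x k then u * (\<Prod>i<K. S (z ! i) (z ! Suc i)) else 0)"
proof -
  have "u * pin I x 0 (z ! 0) * walk_weight S (pin I x) (\<lambda>_. 1) K z
      = u * (pin I x 0 (z ! 0) * (\<Prod>k\<in>{1..K}. pin I x k (z ! k))) * (\<Prod>i<K. S (z ! i) (z ! Suc i))"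
    unfolding walk_weight_def by (simp add: ac_simps)
  also have "\<dots> = (if \<forall>k\<in>I. z ! k = x k then u * (\<Prod>i<K. S (z ! i) (z ! Suc i)) else 0)"
    unfolding prod_pin[OF assms] by simp
  finally show ?thesis .
qed

text \<open>Up to the factor \<open>(2 + \<sigma>)\<^sup>K \<Sum>\<^sub>m (m + 1) w m\<close>, this is the probability that the chain with
  initial law \<^const>\<open>init_law\<close> \<open>w\<close> satisfies the constraints \<open>I, x\<close>.\<close>
definition cyl_amplitude :: "real \<Rightarrow> nat \<Rightarrow> (nat \<Rightarrow> real) \<Rightarrow> nat set \<Rightarrow> (nat \<Rightarrow> nat) \<Rightarrow> real" where
  "cyl_amplitude \<sigma> K w I x =
     infsum (\<lambda>a. w a * pin I x 0 a * walk_sum (motzkin_step \<sigma>) (pin I x) (\<lambda>b. real b + 1) K a) UNIV"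

lemma has_sum_cyl_amplitude:
  assumes "\<sigma> \<ge> 0" "\<And>n. w n \<ge> 0" "summable (\<lambda>n. real n * w n)"
  shows "((\<lambda>a. w a * pin I x 0 a * walk_sum (motzkin_step \<sigma>) (pin I x) (\<lambda>b. real b + 1) K a)
           has_sum cyl_amplitude \<sigma> K w I x) UNIV"
  unfolding cyl_amplitude_def
proof (rule has_sum_infsum, rule summable_on_comparison_test)
  show "(\<lambda>a. 1 * (2 + \<sigma>) ^ K * ((real a + 1) * w a)) summable_on UNIV"
    using has_sum_real_plus_one_mult[OF assms(2,3)]
    by (intro summable_on_cmult_right has_sum_imp_summable)
  show "w a * pin I x 0 a * walk_sum (motzkin_step \<sigma>) (pin I x) (\<lambda>b. real b + 1) K a
      \<le> 1 * (2 + \<sigma>) ^ K * ((real a + 1) * w a)"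
    "0 \<le> w a * pin I x 0 a * walk_sum (motzkin_step \<sigma>) (pin I x) (\<lambda>b. real b + 1) K a" for a
    using assms by (intro weighted_walk_sum_motzkin_step_bounds[where B = 1] pin_nonneg pin_le_1; simp)+
qed

lemma cyl_amplitude_empty:
  assumes "\<And>n. w n \<ge> 0" "summable (\<lambda>n. real n * w n)"
  shows "cyl_amplitude \<sigma> K w {} x = (2 + \<sigma>) ^ K * (\<Sum>m. (real m + 1) * w m)"
  unfolding cyl_amplitude_def pin_empty walk_sum_motzkin_step_harmonic
  using has_sum_cmult_right[OF has_sum_real_plus_one_mult[OF assms], of "(2 + \<sigma>) ^ K"]
  by (intro infsumI) (simp add: algebra_simps)

lemma mc_cyl_prob_eq:
  assumes "\<sigma> > 0" "\<And>n. w n \<ge> 0" "summable (\<lambda>n. real n * w n)" "\<exists>n. w n \<noteq> 0" "I \<subseteq> {..K}"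
  shows "mc_cyl_prob (init_law w) (trans_P \<sigma>) K I x
           = cyl_amplitude \<sigma> K w I x / ((2 + \<sigma>) ^ K * (\<Sum>m. (real m + 1) * w m))"
proof -
  define C where "C = (\<Sum>m. (real m + 1) * w m)"
  have "C > 0" unfolding C_def by (rule suminf_real_plus_one_mult_pos[OF assms(2-4)])
  have init_law: "init_law w a = (real a + 1) * w a / C" for a
    unfolding init_law_def C_def ..
  have cancel: "(f * u / C) * p * (W / (f * D)) = u * p * W / (D * C)"
    if "f \<noteq> 0" "C \<noteq> 0" "D \<noteq> 0" for f u C p W D :: real
    using that by (simp add: field_simps)
  have "((\<lambda>a. w a * pin I x 0 a * walk_sum (motzkin_step \<sigma>) (pin I x) (\<lambda>b. real b + 1) K a
             / ((2 + \<sigma>) ^ K * C)) has_sum cyl_amplitude \<sigma> K w I x / ((2 + \<sigma>) ^ K * C)) UNIV"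
    using assms by (intro has_sum_divide_const has_sum_cyl_amplitude) auto
  then have "((\<lambda>a. init_law w a * pin I x 0 a * walk_sum (trans_P \<sigma>) (pin I x) (\<lambda>_. 1) K a)
      has_sum cyl_amplitude \<sigma> K w I x / ((2 + \<sigma>) ^ K * C)) UNIV"
    by (rule has_sum_cong[THEN iffD1, rotated])
       (use assms(1) \<open>C > 0\<close> in \<open>simp add: init_law walk_sum_trans_P cancel ac_simps\<close>)
  then have lists: "((\<lambda>z. init_law w (z ! 0) * pin I x 0 (z ! 0)
        * walk_weight (trans_P \<sigma>) (pin I x) (\<lambda>_. 1) K z) has_sum cyl_amplitude \<sigma> K w I x / ((2 + \<sigma>) ^ K * C)) {z. length z = Suc K}"
    using assms(1,2) \<open>C > 0\<close>
    by (subst has_sum_walk_weight_iff)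
       (auto simp: init_law intro!: nearest_neighbour_kernel_trans_P pin_nonneg mult_nonneg_nonneg
             divide_nonneg_pos)
  have "((\<lambda>z. init_law w (z ! 0) * (\<Prod>i<K. trans_P \<sigma> (z ! i) (z ! Suc i)))
      has_sum cyl_amplitude \<sigma> K w I x / ((2 + \<sigma>) ^ K * C)) {z. length z = Suc K \<and> (\<forall>k\<in>I. z ! k = x k)}"
    by (rule has_sum_cong_neutral[THEN iffD1, OF _ _ _ lists]) (auto simp: walk_weight_pin[OF assms(5)])
  then show ?thesis
    unfolding mc_cyl_prob_def C_def by (rule infsumI)
qed

section \<open>Pinned Motzkin paths\<close>

definition cyl_event :: "nat \<Rightarrow> nat set \<Rightarrow> (nat \<Rightarrow> nat) \<Rightarrow> nat set \<Rightarrow> (nat \<Rightarrow> nat) \<Rightarrow> nat list set" where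
  "cyl_event L I x J y = {g. (\<forall>k\<in>I. gamma_proc L g k = x k) \<and> (\<forall>k\<in>J. gamma_rev_proc L g k = y k)}"

definition cyl_weight ::
  "real \<Rightarrow> (nat \<Rightarrow> real) \<Rightarrow> (nat \<Rightarrow> real) \<Rightarrow> nat \<Rightarrow> nat set \<Rightarrow> (nat \<Rightarrow> nat) \<Rightarrow> nat set \<Rightarrow> (nat \<Rightarrow> nat) \<Rightarrow> real"
  where "cyl_weight \<sigma> \<alpha> \<beta> L I x J y =
     infsum (\<lambda>g. \<alpha> (g ! 0) * \<beta> (g ! L) * path_weight \<sigma> L g) (motzkin_paths L \<inter> cyl_event L I x J y)"

lemma motzkin_prob_eq_cyl_weight:
  "motzkin_prob \<alpha> \<beta> \<sigma> L (cyl_event L I x J y) = cyl_weight \<sigma> \<alpha> \<beta> L I x J y / cyl_weight \<sigma> \<alpha> \<beta> L {} x {} y"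
  unfolding motzkin_prob_def motzkin_const_def cyl_weight_def cyl_event_def by simp

definition two_sided_pin ::
  "nat \<Rightarrow> nat set \<Rightarrow> (nat \<Rightarrow> nat) \<Rightarrow> nat set \<Rightarrow> (nat \<Rightarrow> nat) \<Rightarrow> nat \<Rightarrow> nat \<Rightarrow> real" where
  "two_sided_pin L I x J y k v =
     (if (k \<in> I \<longrightarrow> v = x k) \<and> (k \<le> L \<and> L - k \<in> J \<longrightarrow> v = y (L - k)) then 1 else 0)"

lemma two_sided_pin_nonneg: "two_sided_pin L I x J y k v \<ge> 0"
  and two_sided_pin_le_1: "two_sided_pin L I x J y k v \<le> 1"
  unfolding two_sided_pin_def by auto

lemma two_sided_pin_eq:
  assumes "I \<subseteq> {..K}" "J \<subseteq> {..K}" "2 * K < L" "k \<le> L"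
  shows "two_sided_pin L I x J y k
           = (if k \<le> K then pin I x k else if L - K \<le> k then pin J y (L - k) else (\<lambda>_. 1))"
  using assms by (auto simp: two_sided_pin_def pin_def fun_eq_iff subset_iff)

lemma prod_two_sided_pin:
  assumes "I \<subseteq> {..K}" "J \<subseteq> {..K}" "K \<le> L"
  shows "two_sided_pin L I x J y 0 (g ! 0) * (\<Prod>k\<in>{1..L}. two_sided_pin L I x J y k (g ! k))
           = (if g \<in> cyl_event L I x J y then 1 else 0)"
proof -
  have "(\<forall>k\<in>I. gamma_proc L g k = x k) \<longleftrightarrow> (\<forall>k\<in>{0..L}. k \<in> I \<longrightarrow> g ! k = x k)"
    using assms by (auto simp: gamma_proc_def)
  moreover have "(\<forall>j\<in>J. gamma_rev_proc L g j = y j) \<longleftrightarrow> (\<forall>k\<in>{0..L}. L - k \<in> J \<longrightarrow> g ! k = y (L - k))"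
  proof -
    have "j \<le> L" if "j \<in> J" for j
      using that assms by auto
    then show ?thesis
      unfolding gamma_rev_proc_def by (metis atLeastAtMost_iff diff_diff_cancel diff_le_self le0)
  qed
  ultimately have "(\<forall>k\<in>{0..L}. (k \<in> I \<longrightarrow> g ! k = x k) \<and> (k \<le> L \<and> L - k \<in> J \<longrightarrow> g ! k = y (L - k)))
      \<longleftrightarrow> g \<in> cyl_event L I x J y"
    unfolding cyl_event_def by auto
  moreover have "two_sided_pin L I x J y 0 (g ! 0) * (\<Prod>k\<in>{1..L}. two_sided_pin L I x J y k (g ! k))
      = (\<Prod>k\<in>{0..L}. two_sided_pin L I x J y k (g ! k))"
    by (simp add: prod.atLeast_Suc_atMost)
  ultimately show ?thesis
    unfolding two_sided_pin_def by (simp only: prod_if_one_zero finite_atLeastAtMost)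
qed

lemma walk_weight_two_sided_pin:
  assumes "I \<subseteq> {..K}" "J \<subseteq> {..K}" "K \<le> L" "length z = Suc L"
  shows "\<alpha> (z ! 0) * two_sided_pin L I x J y 0 (z ! 0)
           * walk_weight (motzkin_step \<sigma>) (two_sided_pin L I x J y) \<beta> L z
         = (if z \<in> motzkin_paths L \<inter> cyl_event L I x J y
            then \<alpha> (z ! 0) * \<beta> (z ! L) * path_weight \<sigma> L z else 0)"
proof -
  let ?c = "two_sided_pin L I x J y"
  have "\<alpha> (z ! 0) * ?c 0 (z ! 0) * walk_weight (motzkin_step \<sigma>) ?c \<beta> L z
      = \<alpha> (z ! 0) * (?c 0 (z ! 0) * (\<Prod>k\<in>{1..L}. ?c k (z ! k)))
        * (\<Prod>k<L. motzkin_step \<sigma> (z ! k) (z ! Suc k)) * \<beta> (z ! L)"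
    unfolding walk_weight_def by (simp add: ac_simps)
  also have "\<dots> = (if z \<in> motzkin_paths L \<inter> cyl_event L I x J y
      then \<alpha> (z ! 0) * \<beta> (z ! L) * path_weight \<sigma> L z else 0)"
    unfolding prod_two_sided_pin[OF assms(1-3)] prod_motzkin_step[OF assms(4)] by simp
  finally show ?thesis .
qed

lemma has_sum_cyl_weight:
  assumes "\<sigma> \<ge> 0" "\<And>n. \<alpha> n \<ge> 0" "\<And>n. \<beta> n \<ge> 0"
    and "summable (\<lambda>n. real n * \<alpha> n)" "summable (\<lambda>n. real n * \<beta> n)"
    and "I \<subseteq> {..K}" "J \<subseteq> {..K}" "K \<le> L"
  shows "((\<lambda>a. \<alpha> a * two_sided_pin L I x J y 0 a
              * walk_sum (motzkin_step \<sigma>) (two_sided_pin L I x J y) \<beta> L a)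
           has_sum cyl_weight \<sigma> \<alpha> \<beta> L I x J y) UNIV"
proof -
  let ?c = "two_sided_pin L I x J y"
  let ?f = "\<lambda>a. \<alpha> a * ?c 0 a * walk_sum (motzkin_step \<sigma>) ?c \<beta> L a"
  obtain B where B: "\<And>n. \<beta> n \<le> B"
  proof -
    have "\<beta> \<longlonglongrightarrow> 0"
      using summable_of_summable_real_mult[OF assms(3,5)] by (rule summable_LIMSEQ_zero)
    then show ?thesis
      using that convergent_imp_Bseq[of \<beta>] by (auto simp: convergent_def Bseq_def abs_le_iff)
  qed
  have \<beta>_le: "\<beta> b \<le> B * (real b + 1)" for b
    using B[of b] assms(3)[of b] mult_left_mono[of 1 "real b + 1" B] by linarith
  have "?f summable_on UNIV"
  proof (rule summable_on_comparison_test)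
    show "(\<lambda>a. B * (2 + \<sigma>) ^ L * ((real a + 1) * \<alpha> a)) summable_on UNIV"
      using has_sum_real_plus_one_mult[OF assms(2,4)]
      by (intro summable_on_cmult_right has_sum_imp_summable)
  qed (use assms \<beta>_le in \<open>intro weighted_walk_sum_motzkin_step_bounds two_sided_pin_nonneg
         two_sided_pin_le_1; simp\<close>)+
  then have "(?f has_sum infsum ?f UNIV) UNIV"
    by (rule has_sum_infsum)
  then have "((\<lambda>z. \<alpha> (z ! 0) * ?c 0 (z ! 0) * walk_weight (motzkin_step \<sigma>) ?c \<beta> L z)
      has_sum infsum ?f UNIV) {z. length z = Suc L}"
    using assms(1-3)
    by (subst has_sum_walk_weight_iff)
       (auto intro!: two_sided_pin_nonneg mult_nonneg_nonneg nearest_neighbour_kernel_motzkin_step)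
  then have "((\<lambda>z. \<alpha> (z ! 0) * \<beta> (z ! L) * path_weight \<sigma> L z)
      has_sum infsum ?f UNIV) (motzkin_paths L \<inter> cyl_event L I x J y)"
    by (rule has_sum_cong_neutral[THEN iffD1, rotated -1])
       (auto simp: walk_weight_two_sided_pin[OF assms(6-8)] motzkin_paths_def)
  then have "cyl_weight \<sigma> \<alpha> \<beta> L I x J y = infsum ?f UNIV"
    unfolding cyl_weight_def by (rule infsumI)
  then show ?thesis
    using \<open>(?f has_sum infsum ?f UNIV) UNIV\<close> by simp
qed

text \<open>The weight of the last \<open>K\<close> steps of a pinned path, read from its right end and viewed as
  a function of the position \<open>b\<close> at time \<open>L - K\<close>.\<close>
definition end_profile :: "real \<Rightarrow> nat \<Rightarrow> (nat \<Rightarrow> real) \<Rightarrow> nat set \<Rightarrow> (nat \<Rightarrow> nat) \<Rightarrow> nat \<Rightarrow> real" where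
  "end_profile \<sigma> K \<beta> J y b = pin J y K b * walk_sum (motzkin_step \<sigma>) (\<lambda>k. pin J y (K - k)) \<beta> K b"

lemma end_profile_nonneg:
  assumes "\<sigma> \<ge> 0" "\<And>n. \<beta> n \<ge> 0"
  shows "end_profile \<sigma> K \<beta> J y b \<ge> 0"
  unfolding end_profile_def using assms
  by (intro mult_nonneg_nonneg pin_nonneg walk_sum_nonneg nearest_neighbour_kernel_motzkin_step)

lemma has_sum_end_profile:
  assumes "\<sigma> \<ge> 0" "\<And>n. \<beta> n \<ge> 0" "summable (\<lambda>n. real n * \<beta> n)"
  shows "((\<lambda>b. (real b + 1) * end_profile \<sigma> K \<beta> J y b) has_sum cyl_amplitude \<sigma> K \<beta> J y) UNIV"
proof -
  have "((\<lambda>b. (real b + 1) * pin J y K b * walk_sum (motzkin_step \<sigma>) (\<lambda>k. pin J y (K - k)) \<beta> K b)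
      has_sum cyl_amplitude \<sigma> K \<beta> J y) UNIV"
    using assms
    by (intro has_sum_walk_sum_transpose has_sum_cyl_amplitude nearest_neighbour_kernel_motzkin_step
          motzkin_step_sym pin_nonneg) auto
  then show ?thesis
    by (simp add: end_profile_def mult.assoc)
qed

lemma walk_sum_two_sided_pin_split:
  assumes "I \<subseteq> {..K}" "J \<subseteq> {..K}" "L = K + Suc M + K"
  shows "walk_sum (motzkin_step \<sigma>) (two_sided_pin L I x J y) \<beta> L a
       = walk_sum (motzkin_step \<sigma>) (pin I x)
           (walk_sum (motzkin_step \<sigma>) (\<lambda>_ _. 1) (end_profile \<sigma> K \<beta> J y) (Suc M)) K a"
proof -
  let ?S = "motzkin_step \<sigma>" and ?c = "two_sided_pin L I x J y"
  have c: "?c k = (if k \<le> K then pin I x k else if L - K \<le> k then pin J y (L - k) else (\<lambda>_. 1))"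
    if "k \<le> L" for k
    using assms that by (intro two_sided_pin_eq) auto
  have initial: "?c k = pin I x k" if "k \<le> K" for k
    using that c[of k] assms(3) by simp
  have free: "?c (k + K) = (\<lambda>_. 1)" if "0 < k" "k \<le> M" for k
    using that c[of "k + K"] assms(3) by simp
  have final: "?c (Suc (k + M + K)) = pin J y (K - k)" if "k \<le> K" for k
    using that c[of "Suc (k + M + K)"] assms(3) by simp
  have last: "walk_sum ?S (\<lambda>k. ?c (k + Suc M + K)) \<beta> K = walk_sum ?S (\<lambda>k. pin J y (K - k)) \<beta> K"
    by (intro ext walk_sum_cong) (simp add: final)
  have middle: "walk_sum ?S (\<lambda>k. ?c (k + K)) \<beta> (Suc M + K)
      = walk_sum ?S (\<lambda>_ _. 1) (end_profile \<sigma> K \<beta> J y) (Suc M)"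
  proof
    fix b
    have "walk_sum ?S (\<lambda>k. ?c (k + K)) \<beta> (Suc M + K) b
        = walk_sum ?S (\<lambda>k. ?c (k + K)) (walk_sum ?S (\<lambda>k. pin J y (K - k)) \<beta> K) (Suc M) b"
      unfolding walk_sum_add last ..
    also have "\<dots> = walk_sum ?S ((\<lambda>k. ?c (k + K))(Suc M := (\<lambda>_. 1)))
        (\<lambda>b. ?c (Suc M + K) b * walk_sum ?S (\<lambda>k. pin J y (K - k)) \<beta> K b) (Suc M) b"
      by (rule walk_sum_last)
    also have "\<dots> = walk_sum ?S ((\<lambda>k. ?c (k + K))(Suc M := (\<lambda>_. 1))) (end_profile \<sigma> K \<beta> J y) (Suc M) b"
      using final[of 0] unfolding end_profile_def by simp
    also have "\<dots> = walk_sum ?S (\<lambda>_ _. 1) (end_profile \<sigma> K \<beta> J y) (Suc M) b"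
      by (rule walk_sum_cong) (simp add: free)
    finally show "walk_sum ?S (\<lambda>k. ?c (k + K)) \<beta> (Suc M + K) b
        = walk_sum ?S (\<lambda>_ _. 1) (end_profile \<sigma> K \<beta> J y) (Suc M) b" .
  qed
  have "walk_sum ?S ?c \<beta> L a = walk_sum ?S ?c (walk_sum ?S (\<lambda>k. ?c (k + K)) \<beta> (Suc M + K)) K a"
    using assms(3) walk_sum_add[of ?S ?c \<beta> K "Suc M + K" a] by (simp add: add.assoc)
  also have "\<dots> = walk_sum ?S (pin I x) (walk_sum ?S (\<lambda>k. ?c (k + K)) \<beta> (Suc M + K)) K a"
    by (intro walk_sum_cong) (simp add: initial)
  finally show ?thesis
    unfolding middle .
qed

lemma has_sum_cyl_weight_split:
  assumes "\<sigma> \<ge> 0" "\<And>n. \<alpha> n \<ge> 0" "\<And>n. \<beta> n \<ge> 0"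
    and "summable (\<lambda>n. real n * \<alpha> n)" "summable (\<lambda>n. real n * \<beta> n)"
    and "I \<subseteq> {..K}" "J \<subseteq> {..K}"
  shows "((\<lambda>a. \<alpha> a * pin I x 0 a * walk_sum (motzkin_step \<sigma>) (pin I x)
              (walk_sum (motzkin_step \<sigma>) (\<lambda>_ _. 1) (end_profile \<sigma> K \<beta> J y) (Suc M)) K a)
           has_sum cyl_weight \<sigma> \<alpha> \<beta> (K + Suc M + K) I x J y) UNIV"
proof -
  let ?L = "K + Suc M + K"
  have "two_sided_pin ?L I x J y 0 = pin I x 0"
    using assms(6,7) two_sided_pin_eq[of I K J ?L 0 x y] by simp
  then show ?thesis
    using has_sum_cyl_weight[of \<sigma> \<alpha> \<beta> I K J ?L x y] assms
    unfolding walk_sum_two_sided_pin_split[OF assms(6,7) refl] by simp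
qed

section \<open>Passage to the limit\<close>

lemma tendsto_infsum_dominated:
  fixes f :: "nat \<Rightarrow> nat \<Rightarrow> real"
  assumes lim: "\<And>k. (\<lambda>n. f n k) \<longlonglongrightarrow> g k"
    and bound: "\<forall>\<^sub>F n in sequentially. \<forall>k. \<bar>f n k\<bar> \<le> h k"
    and "summable h"
  shows "(\<lambda>n. infsum (f n) UNIV) \<longlonglongrightarrow> infsum g UNIV"
proof -
  have infsum_eq: "infsum u UNIV = suminf u" if "summable (\<lambda>k. norm (u k))" for u :: "nat \<Rightarrow> real"
    using that by (intro infsumI norm_summable_imp_has_sum summable_sums[OF summable_norm_cancel])
  have "\<forall>\<^sub>F (k, n) in at_top \<times>\<^sub>F sequentially. norm (f n k) \<le> h k"
    unfolding eventually_prod_filter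
    by (intro exI[of _ "\<lambda>_. True"] exI[of _ "\<lambda>n. \<forall>k. \<bar>f n k\<bar> \<le> h k"]) (use bound in auto)
  from tannerys_theorem[OF lim this \<open>summable h\<close> trivial_limit_sequentially]
  have summable: "\<forall>\<^sub>F n in sequentially. summable (\<lambda>k. norm (f n k))" "summable (\<lambda>k. norm (g k))"
    and "(\<lambda>n. \<Sum>k. f n k) \<longlonglongrightarrow> (\<Sum>k. g k)"
    by auto
  then have "(\<lambda>n. \<Sum>k. f n k) \<longlonglongrightarrow> infsum g UNIV"
    by (simp add: infsum_eq)
  moreover have "\<forall>\<^sub>F n in sequentially. (\<Sum>k. f n k) = infsum (f n) UNIV"
    using summable(1) by eventually_elim (simp add: infsum_eq)
  ultimately show ?thesis
    by (rule Lim_transform_eventually)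
qed

lemma bridge_average_tendsto:
  assumes "\<sigma> > 0" "\<And>b. h b \<ge> 0" "((\<lambda>b. (real b + 1) * h b) has_sum H) UNIV"
  shows "(\<lambda>M. walk_sum (motzkin_step \<sigma>) (\<lambda>_ _. 1) h M a / bridge_weight \<sigma> M 0 0)
           \<longlonglongrightarrow> (real a + 1) * H"
proof -
  have "walk_sum (motzkin_step \<sigma>) (\<lambda>_ _. 1) h M a / bridge_weight \<sigma> M 0 0
      = infsum (\<lambda>b. bridge_weight \<sigma> M a b / bridge_weight \<sigma> M 0 0 * h b) UNIV" for M
    using has_sum_divide_const[OF has_sum_bridge_weight, of \<sigma> M a h "bridge_weight \<sigma> M 0 0"]
    by (simp add: infsumI)
  moreover have "(\<lambda>M. infsum (\<lambda>b. bridge_weight \<sigma> M a b / bridge_weight \<sigma> M 0 0 * h b) UNIV)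
      \<longlonglongrightarrow> infsum (\<lambda>b. (real a + 1) * ((real b + 1) * h b)) UNIV"
  proof (rule tendsto_infsum_dominated)
    show "(\<lambda>M. bridge_weight \<sigma> M a b / bridge_weight \<sigma> M 0 0 * h b)
        \<longlonglongrightarrow> (real a + 1) * ((real b + 1) * h b)" for b
      using tendsto_mult_right[OF bridge_ratio_tendsto[OF assms(1), of a b], of "h b"]
      by (simp only: mult.assoc)
    show "summable (\<lambda>b. 2 * (real a + 1) * ((real b + 1) * h b))"
      using assms(3) by (intro summable_mult has_sum_imp_sums sums_summable)
    show "\<forall>\<^sub>F M in sequentially. \<forall>b.
        \<bar>bridge_weight \<sigma> M a b / bridge_weight \<sigma> M 0 0 * h b\<bar> \<le> 2 * (real a + 1) * ((real b + 1) * h b)"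
      using eventually_bridge_weight_le[OF assms(1)]
    proof eventually_elim
      case (elim M)
      show ?case
      proof
        fix b
        have "bridge_weight \<sigma> M 0 0 > 0" "bridge_weight \<sigma> M a b \<ge> 0"
          using assms(1) by (auto intro: bridge_weight_0_0_pos bridge_weight_nonneg)
        have "bridge_weight \<sigma> M a b * h b
            \<le> 2 * (real a + 1) * (real b + 1) * bridge_weight \<sigma> M 0 0 * h b"
          using mult_right_mono[OF elim[rule_format, of a b] assms(2)[of b]] .
        then have "bridge_weight \<sigma> M a b * h b / bridge_weight \<sigma> M 0 0
            \<le> 2 * (real a + 1) * ((real b + 1) * h b)"
          using \<open>bridge_weight \<sigma> M 0 0 > 0\<close> by (simp add: pos_divide_le_eq ac_simps)
        moreover have "0 \<le> bridge_weight \<sigma> M a b * h b / bridge_weight \<sigma> M 0 0"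
          using \<open>bridge_weight \<sigma> M 0 0 > 0\<close> \<open>bridge_weight \<sigma> M a b \<ge> 0\<close> assms(2)[of b] by simp
        ultimately show "\<bar>bridge_weight \<sigma> M a b / bridge_weight \<sigma> M 0 0 * h b\<bar>
            \<le> 2 * (real a + 1) * ((real b + 1) * h b)"
          by simp
      qed
    qed
  qed
  moreover have "infsum (\<lambda>b. (real a + 1) * ((real b + 1) * h b)) UNIV = (real a + 1) * H"
    using assms(3) by (intro infsumI has_sum_cmult_right)
  ultimately show ?thesis
    by simp
qed

lemma eventually_bridge_average_le:
  assumes "\<sigma> > 0" "\<And>b. h b \<ge> 0" "((\<lambda>b. (real b + 1) * h b) has_sum H) UNIV"
  shows "\<forall>\<^sub>F M in sequentially. \<forall>a.
           walk_sum (motzkin_step \<sigma>) (\<lambda>_ _. 1) h M a / bridge_weight \<sigma> M 0 0 \<le> 2 * (real a + 1) * H"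
  using eventually_bridge_weight_le[OF assms(1)]
proof eventually_elim
  case (elim M)
  show ?case
  proof
    fix a
    have "bridge_weight \<sigma> M 0 0 > 0"
      using assms(1) by (rule bridge_weight_0_0_pos)
    have "walk_sum (motzkin_step \<sigma>) (\<lambda>_ _. 1) h M a
        \<le> 2 * (real a + 1) * bridge_weight \<sigma> M 0 0 * H"
      using has_sum_bridge_weight has_sum_cmult_right[OF assms(3)]
    proof (rule has_sum_mono)
      show "bridge_weight \<sigma> M a b * h b
          \<le> 2 * (real a + 1) * bridge_weight \<sigma> M 0 0 * ((real b + 1) * h b)"
        for b
        using mult_right_mono[OF elim[rule_format, of a b] assms(2)[of b]] by (simp only: ac_simps)
    qed
    then show "walk_sum (motzkin_step \<sigma>) (\<lambda>_ _. 1) h M a / bridge_weight \<sigma> M 0 0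
        \<le> 2 * (real a + 1) * H"
      using \<open>bridge_weight \<sigma> M 0 0 > 0\<close> by (simp add: divide_le_eq ac_simps)
  qed
qed

lemma tendsto_cyl_amplitude:
  assumes "\<sigma> \<ge> 0" "\<And>n. w n \<ge> 0" "summable (\<lambda>n. real n * w n)"
    and "\<And>M b. v M b \<ge> 0" "\<And>b. (\<lambda>M. v M b) \<longlonglongrightarrow> H * (real b + 1)"
    and "\<forall>\<^sub>F M in sequentially. \<forall>b. v M b \<le> C * (real b + 1)"
  shows "(\<lambda>M. infsum (\<lambda>a. w a * pin I x 0 a * walk_sum (motzkin_step \<sigma>) (pin I x) (v M) K a) UNIV)
           \<longlonglongrightarrow> H * cyl_amplitude \<sigma> K w I x"
proof -
  have "(\<lambda>M. infsum (\<lambda>a. w a * pin I x 0 a * walk_sum (motzkin_step \<sigma>) (pin I x) (v M) K a) UNIV)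
      \<longlonglongrightarrow> infsum (\<lambda>a. w a * pin I x 0 a
            * walk_sum (motzkin_step \<sigma>) (pin I x) (\<lambda>b. H * (real b + 1)) K a) UNIV"
  proof (rule tendsto_infsum_dominated)
    show "(\<lambda>M. w a * pin I x 0 a * walk_sum (motzkin_step \<sigma>) (pin I x) (v M) K a)
        \<longlonglongrightarrow> w a * pin I x 0 a * walk_sum (motzkin_step \<sigma>) (pin I x) (\<lambda>b. H * (real b + 1)) K a" for a
      by (intro tendsto_intros tendsto_walk_sum assms(5))
    show "summable (\<lambda>a. C * (2 + \<sigma>) ^ K * ((real a + 1) * w a))"
      using has_sum_real_plus_one_mult[OF assms(2,3)]
      by (intro summable_mult has_sum_imp_sums sums_summable)
    show "\<forall>\<^sub>F M in sequentially. \<forall>a. \<bar>w a * pin I x 0 a * walk_sum (motzkin_step \<sigma>) (pin I x) (v M) K a\<bar>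
        \<le> C * (2 + \<sigma>) ^ K * ((real a + 1) * w a)"
      using assms(6)
    proof (eventually_elim, intro allI)
      case (elim M)
      fix a
      show "\<bar>w a * pin I x 0 a * walk_sum (motzkin_step \<sigma>) (pin I x) (v M) K a\<bar>
          \<le> C * (2 + \<sigma>) ^ K * ((real a + 1) * w a)"
        using weighted_walk_sum_motzkin_step_bounds[of \<sigma> w a "pin I x 0 a" "pin I x" "v M" C K]
          elim assms
        by (simp add: pin_nonneg pin_le_1)
    qed
  qed
  also have "infsum (\<lambda>a. w a * pin I x 0 a
      * walk_sum (motzkin_step \<sigma>) (pin I x) (\<lambda>b. H * (real b + 1)) K a) UNIV
      = H * cyl_amplitude \<sigma> K w I x"
    unfolding cyl_amplitude_def walk_sum_cmult infsum_cmult_right'[symmetric]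
    by (simp add: ac_simps)
  finally show ?thesis .
qed

lemma cyl_weight_tendsto:
  assumes "\<sigma> > 0" "\<And>n. \<alpha> n \<ge> 0" "\<And>n. \<beta> n \<ge> 0"
    and "summable (\<lambda>n. real n * \<alpha> n)" "summable (\<lambda>n. real n * \<beta> n)"
    and "I \<subseteq> {..K}" "J \<subseteq> {..K}"
  shows "(\<lambda>M. cyl_weight \<sigma> \<alpha> \<beta> (K + Suc M + K) I x J y / bridge_weight \<sigma> (Suc M) 0 0)
           \<longlonglongrightarrow> cyl_amplitude \<sigma> K \<alpha> I x * cyl_amplitude \<sigma> K \<beta> J y"
proof -
  define H where "H = cyl_amplitude \<sigma> K \<beta> J y"
  define avg where "avg M b = walk_sum (motzkin_step \<sigma>) (\<lambda>_ _. 1) (end_profile \<sigma> K \<beta> J y) (Suc M) b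
                               / bridge_weight \<sigma> (Suc M) 0 0" for M b
  have profile: "((\<lambda>b. (real b + 1) * end_profile \<sigma> K \<beta> J y b) has_sum H) UNIV"
    unfolding H_def using assms by (intro has_sum_end_profile) auto
  have profile_nonneg: "end_profile \<sigma> K \<beta> J y b \<ge> 0" for b
    using assms by (intro end_profile_nonneg) auto
  have divide: "walk_sum S c (\<lambda>b. v b / r) n a = walk_sum S c v n a / r" for S c v n a and r :: real
    using walk_sum_cmult[of S c "1 / r" v n a] by simp
  have "cyl_weight \<sigma> \<alpha> \<beta> (K + Suc M + K) I x J y / bridge_weight \<sigma> (Suc M) 0 0
      = infsum (\<lambda>a. \<alpha> a * pin I x 0 a * walk_sum (motzkin_step \<sigma>) (pin I x) (avg M) K a) UNIV" for M
    using has_sum_divide_const[OF has_sum_cyl_weight_split, of \<sigma> \<alpha> \<beta> I K J x y M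
        "bridge_weight \<sigma> (Suc M) 0 0"] assms
    unfolding avg_def divide times_divide_eq_right by (simp add: infsumI)
  moreover have "(\<lambda>M. infsum (\<lambda>a. \<alpha> a * pin I x 0 a
        * walk_sum (motzkin_step \<sigma>) (pin I x) (avg M) K a) UNIV) \<longlonglongrightarrow> H * cyl_amplitude \<sigma> K \<alpha> I x"
  proof (rule tendsto_cyl_amplitude[where C = "2 * H"])
    show "avg M b \<ge> 0" for M b
      unfolding avg_def using assms(1) profile_nonneg
      by (intro divide_nonneg_pos walk_sum_nonneg bridge_weight_0_0_pos
          nearest_neighbour_kernel_motzkin_step) auto
    show "(\<lambda>M. avg M b) \<longlonglongrightarrow> H * (real b + 1)" for b
      using LIMSEQ_Suc[OF bridge_average_tendsto[OF assms(1) profile_nonneg profile, of b]]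
      unfolding avg_def mult.commute[of "real b + 1" H] .
    show "\<forall>\<^sub>F M in sequentially. \<forall>b. avg M b \<le> 2 * H * (real b + 1)"
      using eventually_bridge_average_le[OF assms(1) profile_nonneg profile]
        eventually_sequentially_Suc[of "\<lambda>M. \<forall>b. walk_sum (motzkin_step \<sigma>) (\<lambda>_ _. 1)
          (end_profile \<sigma> K \<beta> J y) M b / bridge_weight \<sigma> M 0 0 \<le> 2 * (real b + 1) * H"]
      unfolding avg_def by (simp add: ac_simps)
  qed (use assms in auto)
  ultimately show ?thesis
    unfolding H_def by (simp add: mult.commute)
qed

theorem theorem1p1:
  fixes \<sigma> :: real and \<alpha> \<beta> :: "nat \<Rightarrow> real"
  assumes "\<sigma> > 0"
    and "\<forall>n. \<alpha> n \<ge> 0" and "\<forall>n. \<beta> n \<ge> 0"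
    and "\<exists>n. \<alpha> n \<noteq> 0" and "\<exists>n. \<beta> n \<noteq> 0"
    and "summable (\<lambda>n. real n * \<alpha> n)" and "summable (\<lambda>n. real n * \<beta> n)"
  shows "\<forall>K I J (x :: nat \<Rightarrow> nat) (y :: nat \<Rightarrow> nat). I \<subseteq> {..K} \<longrightarrow> J \<subseteq> {..K} \<longrightarrow>
    ((\<lambda>L. motzkin_prob \<alpha> \<beta> \<sigma> L
            {g. (\<forall>k\<in>I. gamma_proc L g k = x k) \<and> (\<forall>k\<in>J. gamma_rev_proc L g k = y k)})
     \<longlongrightarrow> mc_cyl_prob (init_law \<alpha>) (trans_P \<sigma>) K I x
          * mc_cyl_prob (init_law \<beta>) (trans_P \<sigma>) K J y) sequentially"
proof (intro allI impI)
  fix K :: nat and I J :: "nat set" and x y :: "nat \<Rightarrow> nat"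
  assume "I \<subseteq> {..K}" "J \<subseteq> {..K}"
  moreover have \<alpha>: "\<And>n. \<alpha> n \<ge> 0" and \<beta>: "\<And>n. \<beta> n \<ge> 0"
    using assms(2,3) by auto
  ultimately have "(\<lambda>M. (cyl_weight \<sigma> \<alpha> \<beta> (K + Suc M + K) I x J y / bridge_weight \<sigma> (Suc M) 0 0)
        / (cyl_weight \<sigma> \<alpha> \<beta> (K + Suc M + K) {} x {} y / bridge_weight \<sigma> (Suc M) 0 0))
      \<longlonglongrightarrow> (cyl_amplitude \<sigma> K \<alpha> I x * cyl_amplitude \<sigma> K \<beta> J y)
          / (cyl_amplitude \<sigma> K \<alpha> {} x * cyl_amplitude \<sigma> K \<beta> {} y)"
    using assms suminf_real_plus_one_mult_pos[of \<alpha>] suminf_real_plus_one_mult_pos[of \<beta>]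
    by (intro tendsto_divide cyl_weight_tendsto) (auto simp: cyl_amplitude_empty)
  moreover have "bridge_weight \<sigma> (Suc M) 0 0 \<noteq> 0" for M
    using bridge_weight_0_0_pos[OF assms(1), of "Suc M"] by linarith
  ultimately have "(\<lambda>M. motzkin_prob \<alpha> \<beta> \<sigma> (M + Suc (K + K)) (cyl_event (M + Suc (K + K)) I x J y))
      \<longlonglongrightarrow> mc_cyl_prob (init_law \<alpha>) (trans_P \<sigma>) K I x * mc_cyl_prob (init_law \<beta>) (trans_P \<sigma>) K J y"
    using assms \<open>I \<subseteq> {..K}\<close> \<open>J \<subseteq> {..K}\<close>
    by (simp add: motzkin_prob_eq_cyl_weight mc_cyl_prob_eq cyl_amplitude_empty \<alpha> \<beta> ac_simps)
  then show "(\<lambda>L. motzkin_prob \<alpha> \<beta> \<sigma> L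
            {g. (\<forall>k\<in>I. gamma_proc L g k = x k) \<and> (\<forall>k\<in>J. gamma_rev_proc L g k = y k)})
     \<longlonglongrightarrow> mc_cyl_prob (init_law \<alpha>) (trans_P \<sigma>) K I x * mc_cyl_prob (init_law \<beta>) (trans_P \<sigma>) K J y"
    unfolding cyl_event_def by (rule LIMSEQ_offset)
qed

end
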